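(* Let $\{\Gamma_c\}_{c\in(0,1)}$ be a family of admissible policies with almost surely finite stopping times $\tau$ such that $\alpha_j(\Gamma_c)=O(-c\log c)$ as $c\to0$ for all $j=1,\dots,M$. Let $0<\epsilon<1$. Then for every $m=1,\dots,M$, $$\mathbf P_m\big(\Delta S_m(\tau)<-(1-\epsilon)\log c\,\big|\,\Gamma_c\big)=O(-c^{\epsilon}\log c)\qquad(c\to0).$$
   Context: Model. Fix integers $M\ge2$, $1\le K\le M$. There are $M$ cells, exactly one containing a target; $H_m$: the target is in cell $m$. $f,g$ are probability densities w.r.t. a common measure with $0<D(g\|f),D(f\|g)<\infty$ ($D(p\|q)=\int p\log(p/q)$). At each time $n$ a set $\phi(n)$ of $K$ distinct cells is selected and an observation $y_k(n)$ is obtained from each $k\in\phi(n)$; under $H_m$ observations are independent with law $g$ from cell $m$ and $f$ from other cells. An admissible policy: a (possibly randomized) history-dependent selection rule, a stopping time $\tau$, and decision $\delta\in\{1,\dots,M\}$. $\mathbf P_m$: probability under $H_m$; $\alpha_m(\Gamma)=\mathbf P_m(\delta\ne m)$. Notation. $\ell_k(n)=\log\frac{g(y_k(n))}{f(y_k(n))}$, $\mathbf 1_k(n)$ indicates cell $k$ is observed at time $n$, $S_k(n)=\sum_{t\le n}\ell_k(t)\mathbf1_k(t)$, and $\Delta S_m(n)=\min_{j\ne m}\big(S_m(n)-S_j(n)\big)$. *)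

theory Defs
  imports "HOL-Probability.Probability" "HOL-Library.Landau_Symbols"
begin

text \<open>Cells are 1..M, times are 1,2,...
  The observation that would be obtained from cell k at time t is Y (t,k);
  under H_m all Y (t,k) are independent, with density g if k = m and f otherwise.
  A (possibly randomized) policy uses an independent randomization r (law R)
  and the history of observed values only.\<close>

type_synonym 'a obs = "nat \<times> nat \<Rightarrow> 'a"
type_synonym 'a hist = "(nat \<Rightarrow> 'a option) list"

record ('r, 'a) policy =
  sel :: "'r \<Rightarrow> 'a hist \<Rightarrow> nat set"
  stp :: "'r \<Rightarrow> 'a hist \<Rightarrow> bool"
  dec :: "'r \<Rightarrow> 'a hist \<Rightarrow> nat"

definition obs_at :: "nat set \<Rightarrow> 'a obs \<Rightarrow> nat \<Rightarrow> nat \<Rightarrow> 'a option" where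
  "obs_at S Y t = (\<lambda>k. if k \<in> S then Some (Y (t, k)) else None)"

fun hist :: "('r, 'a) policy \<Rightarrow> 'r \<Rightarrow> 'a obs \<Rightarrow> nat \<Rightarrow> 'a hist" where
  "hist P r Y 0 = []"
| "hist P r Y (Suc n) = hist P r Y n @ [obs_at (sel P r (hist P r Y n)) Y (Suc n)]"

definition phi :: "('r, 'a) policy \<Rightarrow> 'r \<Rightarrow> 'a obs \<Rightarrow> nat \<Rightarrow> nat set" where
  "phi P r Y t = sel P r (hist P r Y (t - 1))"

definition llr :: "('a \<Rightarrow> real) \<Rightarrow> ('a \<Rightarrow> real) \<Rightarrow> 'a \<Rightarrow> real" where
  "llr f g y = ln (g y / f y)"

definition Ssum :: "('a \<Rightarrow> real) \<Rightarrow> ('a \<Rightarrow> real) \<Rightarrow> ('r, 'a) policy \<Rightarrow> 'r \<Rightarrow> 'a obs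
    \<Rightarrow> nat \<Rightarrow> nat \<Rightarrow> real" where
  "Ssum f g P r Y k n = (\<Sum>t\<in>{1..n}. if k \<in> phi P r Y t then llr f g (Y (t, k)) else 0)"

definition DeltaS :: "nat \<Rightarrow> ('a \<Rightarrow> real) \<Rightarrow> ('a \<Rightarrow> real) \<Rightarrow> ('r, 'a) policy \<Rightarrow> 'r \<Rightarrow> 'a obs
    \<Rightarrow> nat \<Rightarrow> nat \<Rightarrow> real" where
  "DeltaS M f g P r Y m n =
     Min ((\<lambda>j. Ssum f g P r Y m n - Ssum f g P r Y j n) ` ({1..M} - {m}))"

definition stops :: "('r, 'a) policy \<Rightarrow> 'r \<Rightarrow> 'a obs \<Rightarrow> bool" where
  "stops P r Y = (\<exists>n. stp P r (hist P r Y n))"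

text \<open>Stopping time tau (meaningful when stops holds).\<close>
definition tau :: "('r, 'a) policy \<Rightarrow> 'r \<Rightarrow> 'a obs \<Rightarrow> nat" where
  "tau P r Y = (LEAST n. stp P r (hist P r Y n))"

definition decision :: "('r, 'a) policy \<Rightarrow> 'r \<Rightarrow> 'a obs \<Rightarrow> nat" where
  "decision P r Y = dec P r (hist P r Y (tau P r Y))"

definition hyp_space :: "'r measure \<Rightarrow> 'a measure \<Rightarrow> ('a \<Rightarrow> real) \<Rightarrow> ('a \<Rightarrow> real) \<Rightarrow> nat
    \<Rightarrow> ('r \<times> 'a obs) measure" where
  "hyp_space R \<mu> f g m =
     R \<Otimes>\<^sub>M (\<Pi>\<^sub>M i\<in>(UNIV :: (nat \<times> nat) set).
               density \<mu> (\<lambda>x. ennreal (if snd i = m then g x else f x)))"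

definition err_prob :: "'r measure \<Rightarrow> 'a measure \<Rightarrow> ('a \<Rightarrow> real) \<Rightarrow> ('a \<Rightarrow> real)
    \<Rightarrow> ('r, 'a) policy \<Rightarrow> nat \<Rightarrow> real" where
  "err_prob R \<mu> f g P m =
     measure (hyp_space R \<mu> f g m)
       {\<omega> \<in> space (hyp_space R \<mu> f g m). decision P (fst \<omega>) (snd \<omega>) \<noteq> m}"

definition admissible :: "nat \<Rightarrow> nat \<Rightarrow> 'r measure \<Rightarrow> 'a measure \<Rightarrow> ('a \<Rightarrow> real)
    \<Rightarrow> ('a \<Rightarrow> real) \<Rightarrow> ('r, 'a) policy \<Rightarrow> bool" where
  "admissible M K R \<mu> f g P \<longleftrightarrow>
     (\<forall>r h. sel P r h \<subseteq> {1..M} \<and> card (sel P r h) = K) \<and>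
     (\<forall>r h. dec P r h \<in> {1..M}) \<and>
     (\<forall>j\<in>{1..M}. \<forall>n.
        (\<lambda>\<omega>. sel P (fst \<omega>) (hist P (fst \<omega>) (snd \<omega>) n))
           \<in> hyp_space R \<mu> f g j \<rightarrow>\<^sub>M count_space UNIV \<and>
        (\<lambda>\<omega>. stp P (fst \<omega>) (hist P (fst \<omega>) (snd \<omega>) n))
           \<in> hyp_space R \<mu> f g j \<rightarrow>\<^sub>M count_space UNIV \<and>
        (\<lambda>\<omega>. dec P (fst \<omega>) (hist P (fst \<omega>) (snd \<omega>) n))
           \<in> hyp_space R \<mu> f g j \<rightarrow>\<^sub>M count_space UNIV)"

end

theory Submission
  imports Defs
begin

(* Lemma 1 is a change-of-measure bound. Let P_m be the joint law of the randomisation and of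
   all potential observations Y(t,k) under H_m. If an event Q is determined by the history up
   to time n, the likelihood-ratio identity
       P_j(Q) = E_m[1_Q exp(S_j(n) - S_m(n))]
   gives P_m(Q and S_m(n) - S_j(n) < L) <= e^L P_j(Q). Applied to Q = "the policy stops at n
   and declares m", and summed over n, this yields
       P_m(delta = m and S_m(tau) - S_j(tau) < L) <= e^L alpha_j.
   On {delta = m}, Delta S_m(tau) < L forces S_m(tau) - S_j(tau) < L for some j /= m, so
       P_m(Delta S_m(tau) < L) <= alpha_m + e^L (sum over j /= m of alpha_j),
   and with L = -(1 - eps) log c, i.e. e^L = c^(eps - 1), the O-bound follows. *)

definition cell_density :: "('a \<Rightarrow> real) \<Rightarrow> ('a \<Rightarrow> real) \<Rightarrow> bool \<Rightarrow> 'a \<Rightarrow> real" where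
  "cell_density f g b x = (if b then g x else f x)"

definition cell_law :: "'a measure \<Rightarrow> ('a \<Rightarrow> real) \<Rightarrow> ('a \<Rightarrow> real) \<Rightarrow> (nat \<times> nat \<Rightarrow> bool) \<Rightarrow>
    nat \<times> nat \<Rightarrow> 'a measure" where
  "cell_law \<mu> f g \<sigma> i = density \<mu> (\<lambda>x. ennreal (cell_density f g (\<sigma> i) x))"

(* Randomisation times all potential observations Y(t,k); sigma (t,k) says whether cell k is
   treated as the target cell at time t.  Mixed patterns occur in the proof of the
   likelihood-ratio identity. *)
definition obs_space :: "'r measure \<Rightarrow> 'a measure \<Rightarrow> ('a \<Rightarrow> real) \<Rightarrow> ('a \<Rightarrow> real) \<Rightarrow>
    (nat \<times> nat \<Rightarrow> bool) \<Rightarrow> ('r \<times> 'a obs) measure" where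
  "obs_space R \<mu> f g \<sigma> = R \<Otimes>\<^sub>M (\<Pi>\<^sub>M i\<in>UNIV. cell_law \<mu> f g \<sigma> i)"

lemma hyp_space_eq_obs_space: "hyp_space R \<mu> f g m = obs_space R \<mu> f g (\<lambda>i. snd i = m)"
  unfolding hyp_space_def obs_space_def cell_law_def cell_density_def by simp

locale search_model =
  fixes \<mu> :: "'a measure" and f g :: "'a \<Rightarrow> real" and R :: "'r measure"
  assumes f_measurable[measurable]: "f \<in> borel_measurable \<mu>" and g_measurable[measurable]: "g \<in> borel_measurable \<mu>"
    and f_nonneg: "\<forall>x\<in>space \<mu>. 0 \<le> f x" and g_nonneg: "\<forall>x\<in>space \<mu>. 0 \<le> g x"
    and f_prob: "prob_space (density \<mu> (\<lambda>x. ennreal (f x)))"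
    and g_prob: "prob_space (density \<mu> (\<lambda>x. ennreal (g x)))"
    and f_g_vanish_together: "AE x in \<mu>. (f x = 0 \<longleftrightarrow> g x = 0)"
    and R_prob: "prob_space R"
begin

lemma cell_density_measurable[measurable]: "cell_density f g b \<in> borel_measurable \<mu>"
  unfolding cell_density_def by (cases b) auto

lemma cell_density_nonneg: "x \<in> space \<mu> \<Longrightarrow> 0 \<le> cell_density f g b x"
  using f_nonneg g_nonneg unfolding cell_density_def by auto

lemma cell_law_prob: "prob_space (cell_law \<mu> f g \<sigma> i)"
  unfolding cell_law_def cell_density_def using f_prob g_prob by (cases "\<sigma> i") auto

lemma sets_cell_law[simp, measurable_cong]: "sets (cell_law \<mu> f g \<sigma> i) = sets \<mu>"
  unfolding cell_law_def by simp

lemma space_cell_law[simp]: "space (cell_law \<mu> f g \<sigma> i) = space \<mu>"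
  unfolding cell_law_def by simp

lemma PiM_cell_law_prob: "prob_space (\<Pi>\<^sub>M i\<in>I. cell_law \<mu> f g \<sigma> i)"
  by (intro prob_space_PiM cell_law_prob)

lemma sets_PiM_cell_law: "sets (\<Pi>\<^sub>M i\<in>I. cell_law \<mu> f g \<sigma> i) = sets (\<Pi>\<^sub>M i\<in>I. cell_law \<mu> f g \<sigma>' i)"
  by (intro sets_PiM_cong) auto

lemma sets_obs_space: "sets (obs_space R \<mu> f g \<sigma>) = sets (obs_space R \<mu> f g \<sigma>')"
  unfolding obs_space_def by (intro sets_pair_measure_cong sets_PiM_cell_law refl)


lemma measurable_obs_space:
  "h \<in> borel_measurable (obs_space R \<mu> f g \<sigma>) \<Longrightarrow> h \<in> borel_measurable (obs_space R \<mu> f g \<sigma>')"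
  using measurable_cong_sets[OF sets_obs_space refl] by blast

lemma coord_measurable: "(\<lambda>\<omega>. snd \<omega> i) \<in> measurable (obs_space R \<mu> f g \<sigma>) \<mu>"
proof -
  have "(\<lambda>\<omega>. snd \<omega> i) \<in> measurable (obs_space R \<mu> f g \<sigma>) (cell_law \<mu> f g \<sigma> i)"
    unfolding obs_space_def by measurable
  then show ?thesis by (subst (asm) measurable_cong_sets[OF refl sets_cell_law])
qed

lemma coord_comp_measurable:
  "h \<in> borel_measurable \<mu> \<Longrightarrow> (\<lambda>\<omega>. h (snd \<omega> i)) \<in> borel_measurable (obs_space R \<mu> f g \<sigma>)"
  using measurable_compose[OF coord_measurable] by blast

lemma insert_coord_measurable:
  "(\<lambda>(x, X). X(i0 := x)) \<in> measurable
     (cell_law \<mu> f g \<sigma>' i0 \<Otimes>\<^sub>M (\<Pi>\<^sub>M i\<in>UNIV-{i0}. cell_law \<mu> f g \<sigma>'' i))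
     (\<Pi>\<^sub>M i\<in>UNIV. cell_law \<mu> f g \<sigma> i)"
proof -
  have ins: "insert i0 (UNIV - {i0}) = UNIV" by auto
  have m: "(\<lambda>p. (\<lambda>(X, x). X(i0 := x)) ((\<lambda>(x, X). (X, x)) p)) \<in> measurable
      (cell_law \<mu> f g \<sigma> i0 \<Otimes>\<^sub>M (\<Pi>\<^sub>M i\<in>UNIV-{i0}. cell_law \<mu> f g \<sigma> i))
      (\<Pi>\<^sub>M i\<in>insert i0 (UNIV-{i0}). cell_law \<mu> f g \<sigma> i)"
    by (rule measurable_compose[OF measurable_pair_swap' measurable_add_dim])
  have swap: "(\<lambda>p. (\<lambda>(X, x). X(i0 := x)) ((\<lambda>(x, X). (X, x)) p)) = (\<lambda>(x, X). X(i0 := x))"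
    by (auto simp: fun_eq_iff)
  have "sets (cell_law \<mu> f g \<sigma> i0 \<Otimes>\<^sub>M (\<Pi>\<^sub>M i\<in>UNIV-{i0}. cell_law \<mu> f g \<sigma> i)) =
      sets (cell_law \<mu> f g \<sigma>' i0 \<Otimes>\<^sub>M (\<Pi>\<^sub>M i\<in>UNIV-{i0}. cell_law \<mu> f g \<sigma>'' i))"
    by (intro sets_pair_measure_cong sets_PiM_cell_law) simp
  note domain = measurable_cong_sets[OF this refl, of "\<Pi>\<^sub>M i\<in>UNIV. cell_law \<mu> f g \<sigma> i"]
  show ?thesis using m unfolding swap ins domain .
qed

lemma nn_integral_split_coord:
  assumes Psi: "Psi \<in> borel_measurable (obs_space R \<mu> f g \<sigma>)"
  shows "(\<integral>\<^sup>+\<omega>. Psi \<omega> \<partial>obs_space R \<mu> f g \<sigma>) =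
     (\<integral>\<^sup>+r. \<integral>\<^sup>+x. \<integral>\<^sup>+X. Psi (r, X(i0:=x)) \<partial>(\<Pi>\<^sub>M i\<in>UNIV-{i0}. cell_law \<mu> f g \<sigma> i)
        \<partial>cell_law \<mu> f g \<sigma> i0 \<partial>R)"
proof -
  let ?N = "cell_law \<mu> f g \<sigma>"
  let ?P = "\<Pi>\<^sub>M i\<in>UNIV. ?N i"
  let ?PI = "\<Pi>\<^sub>M i\<in>UNIV-{i0}. ?N i"
  interpret P: prob_space ?P by (rule PiM_cell_law_prob)
  interpret PI: prob_space ?PI by (rule PiM_cell_law_prob)
  interpret N0: prob_space "?N i0" by (rule cell_law_prob)
  interpret PP: pair_sigma_finite "?N i0" ?PI ..
  have ins: "insert i0 (UNIV - {i0}) = UNIV" by auto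
  have D: "distr (?N i0 \<Otimes>\<^sub>M ?PI) ?P (\<lambda>(x, X). X(i0 := x)) = ?P"
    using distr_pair_PiM_eq_PiM[of "UNIV-{i0}" ?N i0, OF cell_law_prob cell_law_prob]
    unfolding ins .
  have Pm: "Psi \<in> borel_measurable (R \<Otimes>\<^sub>M ?P)" using Psi unfolding obs_space_def .
  note mT = insert_coord_measurable[of i0 \<sigma> \<sigma> \<sigma>]
  have inner: "(\<integral>\<^sup>+Y. Psi (r, Y) \<partial>?P) = (\<integral>\<^sup>+x. \<integral>\<^sup>+X. Psi (r, X(i0:=x)) \<partial>?PI \<partial>?N i0)"
    if r: "r \<in> space R" for r
  proof -
    have m1: "(\<lambda>Y. Psi (r, Y)) \<in> borel_measurable ?P" using Pm r by measurable
    have m2: "(\<lambda>p. Psi (r, (case p of (x, X) \<Rightarrow> X(i0 := x)))) \<in> borel_measurable (?N i0 \<Otimes>\<^sub>M ?PI)"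
      using Pm r mT by measurable
    have "(\<integral>\<^sup>+Y. Psi (r, Y) \<partial>?P) =
        (\<integral>\<^sup>+p. Psi (r, (case p of (x, X) \<Rightarrow> X(i0 := x))) \<partial>(?N i0 \<Otimes>\<^sub>M ?PI))"
      using nn_integral_distr[OF mT, of "\<lambda>Y. Psi (r, Y)"] m1 D by simp
    also have "\<dots> = (\<integral>\<^sup>+x. \<integral>\<^sup>+X. Psi (r, X(i0:=x)) \<partial>?PI \<partial>?N i0)"
      using PI.nn_integral_fst[OF m2] by simp
    finally show ?thesis .
  qed
  have "(\<integral>\<^sup>+\<omega>. Psi \<omega> \<partial>obs_space R \<mu> f g \<sigma>) = (\<integral>\<^sup>+r. \<integral>\<^sup>+Y. Psi (r, Y) \<partial>?P \<partial>R)"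
    unfolding obs_space_def using P.nn_integral_fst[OF Pm] by simp
  also have "\<dots> = (\<integral>\<^sup>+r. \<integral>\<^sup>+x. \<integral>\<^sup>+X. Psi (r, X(i0:=x)) \<partial>?PI \<partial>?N i0 \<partial>R)"
    by (rule nn_integral_cong) (rule inner)
  finally show ?thesis .
qed

lemma split_coord_measurable:
  assumes Psi: "Psi \<in> borel_measurable (obs_space R \<mu> f g \<sigma>)" and r: "r \<in> space R"
  shows "(\<lambda>x. \<integral>\<^sup>+X. Psi (r, X(i0:=x)) \<partial>(\<Pi>\<^sub>M i\<in>UNIV-{i0}. cell_law \<mu> f g \<sigma>' i))
           \<in> borel_measurable \<mu>"
proof -
  let ?PI = "\<Pi>\<^sub>M i\<in>UNIV-{i0}. cell_law \<mu> f g \<sigma>' i"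
  interpret PI: prob_space ?PI by (rule PiM_cell_law_prob)
  have Pm: "Psi \<in> borel_measurable (R \<Otimes>\<^sub>M (\<Pi>\<^sub>M i\<in>UNIV. cell_law \<mu> f g \<sigma> i))"
    using Psi unfolding obs_space_def .
  note mT = insert_coord_measurable[of i0 \<sigma> \<sigma>' \<sigma>]
  have m2: "(\<lambda>p. Psi (r, (case p of (x, X) \<Rightarrow> X(i0 := x))))
      \<in> borel_measurable (cell_law \<mu> f g \<sigma> i0 \<Otimes>\<^sub>M ?PI)"
    using Pm r mT by measurable
  have "(\<lambda>x. \<integral>\<^sup>+X. Psi (r, X(i0:=x)) \<partial>?PI) \<in> borel_measurable (cell_law \<mu> f g \<sigma> i0)"
    using PI.borel_measurable_nn_integral_fst[OF m2] by simp
  then show ?thesis by (subst (asm) measurable_cong_sets[OF sets_cell_law refl])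
qed

lemma fun_upd_measurable:
  assumes x: "x \<in> space \<mu>"
  shows "(\<lambda>X. X(i0:=x)) \<in> measurable (\<Pi>\<^sub>M i\<in>UNIV-{i0}. cell_law \<mu> f g \<sigma> i) (\<Pi>\<^sub>M i\<in>UNIV. cell_law \<mu> f g \<sigma>' i)"
proof -
  have m: "(\<lambda>X. (id X)(i0 := x)) \<in> measurable (\<Pi>\<^sub>M i\<in>UNIV-{i0}. cell_law \<mu> f g \<sigma> i)
      (\<Pi>\<^sub>M i\<in>UNIV. cell_law \<mu> f g \<sigma> i)"
    by (rule measurable_fun_upd[where J="UNIV-{i0}"]) (auto simp: x)
  have e: "measurable (\<Pi>\<^sub>M i\<in>UNIV-{i0}. cell_law \<mu> f g \<sigma> i) (\<Pi>\<^sub>M i\<in>UNIV. cell_law \<mu> f g \<sigma>' i) =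
      measurable (\<Pi>\<^sub>M i\<in>UNIV-{i0}. cell_law \<mu> f g \<sigma> i) (\<Pi>\<^sub>M i\<in>UNIV. cell_law \<mu> f g \<sigma> i)"
    by (rule measurable_cong_sets[OF refl sets_PiM_cell_law])
  show ?thesis using m e by simp
qed

lemma fun_upd_comp_measurable:
  assumes Psi: "Psi \<in> borel_measurable (obs_space R \<mu> f g \<sigma>)" and x: "x \<in> space \<mu>" and r: "r \<in> space R"
  shows "(\<lambda>X. Psi (r, X(i0:=x))) \<in> borel_measurable (\<Pi>\<^sub>M i\<in>UNIV-{i0}. cell_law \<mu> f g \<sigma>' i)"
proof -
  have "(\<lambda>X. (r, X(i0:=x))) \<in> measurable (\<Pi>\<^sub>M i\<in>UNIV-{i0}. cell_law \<mu> f g \<sigma>' i) (obs_space R \<mu> f g \<sigma>)"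
    unfolding obs_space_def by (rule measurable_Pair[OF measurable_const[OF r] fun_upd_measurable[OF x]])
  then show ?thesis using Psi by (rule measurable_compose)
qed

(* Changing the density of a single integration variable, using that f and g vanish together. *)
lemma nn_integral_density_ratio:
  assumes F[measurable]: "F \<in> borel_measurable \<mu>"
  shows "(\<integral>\<^sup>+x. F x \<partial>density \<mu> (\<lambda>x. ennreal (cell_density f g b x))) =
         (\<integral>\<^sup>+x. ennreal (cell_density f g b x / cell_density f g a x) * F x
            \<partial>density \<mu> (\<lambda>x. ennreal (cell_density f g a x)))"
proof -
  let ?d = "cell_density f g"
  have "(\<integral>\<^sup>+x. F x \<partial>density \<mu> (\<lambda>x. ennreal (?d b x))) = (\<integral>\<^sup>+x. ennreal (?d b x) * F x \<partial>\<mu>)"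
    by (rule nn_integral_density) auto
  also have "\<dots> = (\<integral>\<^sup>+x. ennreal (?d a x) * (ennreal (?d b x / ?d a x) * F x) \<partial>\<mu>)"
  proof (rule nn_integral_cong_AE)
    show "AE x in \<mu>. ennreal (?d b x) * F x = ennreal (?d a x) * (ennreal (?d b x / ?d a x) * F x)"
      using f_g_vanish_together AE_space
    proof eventually_elim
      case (elim x)
      have "?d b x = ?d a x * (?d b x / ?d a x)"
        using elim unfolding cell_density_def by auto
      moreover have "0 \<le> ?d a x" "0 \<le> ?d b x / ?d a x"
        using cell_density_nonneg[OF elim(2)] by auto
      ultimately show ?case
        by (metis ennreal_mult mult.assoc)
    qed
  qed
  also have "\<dots> = (\<integral>\<^sup>+x. ennreal (?d b x / ?d a x) * F x \<partial>density \<mu> (\<lambda>x. ennreal (?d a x)))"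
    by (rule nn_integral_density[symmetric]) auto
  finally show ?thesis .
qed

lemma nn_integral_change_coord_law:
  assumes Psi: "Psi \<in> borel_measurable (obs_space R \<mu> f g \<sigma>)"
  shows "(\<integral>\<^sup>+\<omega>. Psi \<omega> \<partial>obs_space R \<mu> f g (\<sigma>(i0:=b))) =
    (\<integral>\<^sup>+\<omega>. Psi \<omega> * ennreal (cell_density f g b (snd \<omega> i0) / cell_density f g (\<sigma> i0) (snd \<omega> i0))
       \<partial>obs_space R \<mu> f g \<sigma>)"
proof -
  let ?\<sigma>' = "\<sigma>(i0:=b)"
  let ?PI = "\<Pi>\<^sub>M i\<in>UNIV-{i0}. cell_law \<mu> f g \<sigma> i"
  let ?H = "\<lambda>r x. \<integral>\<^sup>+X. Psi (r, X(i0:=x)) \<partial>?PI"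
  let ?w = "\<lambda>x. ennreal (cell_density f g b x / cell_density f g (\<sigma> i0) x)"
  have PIeq: "(\<Pi>\<^sub>M i\<in>UNIV-{i0}. cell_law \<mu> f g ?\<sigma>' i) = ?PI"
    by (intro PiM_cong) (auto simp: cell_law_def)
  have law_b: "cell_law \<mu> f g ?\<sigma>' i0 = density \<mu> (\<lambda>x. ennreal (cell_density f g b x))"
    and law_i0: "cell_law \<mu> f g \<sigma> i0 = density \<mu> (\<lambda>x. ennreal (cell_density f g (\<sigma> i0) x))"
    by (simp_all add: cell_law_def)
  have m: "(\<lambda>\<omega>. Psi \<omega> * ?w (snd \<omega> i0)) \<in> borel_measurable (obs_space R \<mu> f g \<sigma>)"
    using Psi unfolding obs_space_def by measurable
  have "(\<integral>\<^sup>+\<omega>. Psi \<omega> \<partial>obs_space R \<mu> f g ?\<sigma>') = (\<integral>\<^sup>+r. \<integral>\<^sup>+x. ?H r x \<partial>cell_law \<mu> f g ?\<sigma>' i0 \<partial>R)"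
    using nn_integral_split_coord[OF measurable_obs_space[OF Psi], of ?\<sigma>' i0] unfolding PIeq .
  also have "\<dots> = (\<integral>\<^sup>+r. \<integral>\<^sup>+x. ?w x * ?H r x \<partial>cell_law \<mu> f g \<sigma> i0 \<partial>R)"
    unfolding law_b law_i0
    by (intro nn_integral_cong nn_integral_density_ratio split_coord_measurable[OF Psi])
  also have "\<dots> = (\<integral>\<^sup>+r. \<integral>\<^sup>+x. \<integral>\<^sup>+X. Psi (r, X(i0:=x)) * ?w x \<partial>?PI \<partial>cell_law \<mu> f g \<sigma> i0 \<partial>R)"
  proof (intro nn_integral_cong)
    fix r x assume r: "r \<in> space R" and x: "x \<in> space (cell_law \<mu> f g \<sigma> i0)"
    show "?w x * ?H r x = (\<integral>\<^sup>+X. Psi (r, X(i0:=x)) * ?w x \<partial>?PI)"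
      using fun_upd_comp_measurable[OF Psi _ r] x by (subst nn_integral_multc) (auto simp: mult.commute)
  qed
  also have "\<dots> = (\<integral>\<^sup>+\<omega>. Psi \<omega> * ?w (snd \<omega> i0) \<partial>obs_space R \<mu> f g \<sigma>)"
    using nn_integral_split_coord[OF m, of i0] by simp
  finally show ?thesis .
qed

lemma nn_integral_unit_weight:
  assumes Phi: "Phi \<in> borel_measurable (obs_space R \<mu> f g \<sigma>)"
    and inv: "\<And>r Y x. Phi (r, Y(i0:=x)) = Phi (r, Y)"
    and q: "q \<in> borel_measurable \<mu>"
    and q1: "(\<integral>\<^sup>+x. q x \<partial>cell_law \<mu> f g \<sigma> i0) = 1"
  shows "(\<integral>\<^sup>+\<omega>. Phi \<omega> * q (snd \<omega> i0) \<partial>obs_space R \<mu> f g \<sigma>) = (\<integral>\<^sup>+\<omega>. Phi \<omega> \<partial>obs_space R \<mu> f g \<sigma>)"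
proof -
  let ?PI = "\<Pi>\<^sub>M i\<in>UNIV-{i0}. cell_law \<mu> f g \<sigma> i"
  interpret N0: prob_space "cell_law \<mu> f g \<sigma> i0" by (rule cell_law_prob)
  have m: "(\<lambda>\<omega>. Phi \<omega> * q (snd \<omega> i0)) \<in> borel_measurable (obs_space R \<mu> f g \<sigma>)"
    using Phi q unfolding obs_space_def by measurable
  have qm: "q \<in> borel_measurable (cell_law \<mu> f g \<sigma> i0)"
    using q by (subst measurable_cong_sets[OF sets_cell_law refl])
  have "(\<integral>\<^sup>+\<omega>. Phi \<omega> * q (snd \<omega> i0) \<partial>obs_space R \<mu> f g \<sigma>) =
     (\<integral>\<^sup>+r. \<integral>\<^sup>+x. \<integral>\<^sup>+X. Phi (r, X(i0:=x)) * q x \<partial>?PI \<partial>cell_law \<mu> f g \<sigma> i0 \<partial>R)"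
    by (subst nn_integral_split_coord[OF m, of i0]) simp
  also have "\<dots> = (\<integral>\<^sup>+r. \<integral>\<^sup>+x. q x * (\<integral>\<^sup>+X. Phi (r, X(i0:=x)) \<partial>?PI) \<partial>cell_law \<mu> f g \<sigma> i0 \<partial>R)"
  proof (intro nn_integral_cong)
    fix r x assume r: "r \<in> space R" and x: "x \<in> space (cell_law \<mu> f g \<sigma> i0)"
    show "(\<integral>\<^sup>+X. Phi (r, X(i0:=x)) * q x \<partial>?PI) = q x * (\<integral>\<^sup>+X. Phi (r, X(i0:=x)) \<partial>?PI)"
      using fun_upd_comp_measurable[OF Phi _ r] x by (subst nn_integral_multc) (auto simp: mult.commute)
  qed
  also have "\<dots> = (\<integral>\<^sup>+r. \<integral>\<^sup>+x. q x * (\<integral>\<^sup>+X. Phi (r, X) \<partial>?PI) \<partial>cell_law \<mu> f g \<sigma> i0 \<partial>R)"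
    by (simp only: inv)
  also have "\<dots> = (\<integral>\<^sup>+r. (\<integral>\<^sup>+x. q x \<partial>cell_law \<mu> f g \<sigma> i0) * (\<integral>\<^sup>+X. Phi (r, X) \<partial>?PI) \<partial>R)"
    by (intro nn_integral_cong nn_integral_multc qm)
  also have "\<dots> = (\<integral>\<^sup>+r. (\<integral>\<^sup>+x. 1 \<partial>cell_law \<mu> f g \<sigma> i0) * (\<integral>\<^sup>+X. Phi (r, X) \<partial>?PI) \<partial>R)"
    by (simp only: q1 N0.emeasure_space_1 nn_integral_const mult_1)
  also have "\<dots> = (\<integral>\<^sup>+r. \<integral>\<^sup>+x. 1 * (\<integral>\<^sup>+X. Phi (r, X) \<partial>?PI) \<partial>cell_law \<mu> f g \<sigma> i0 \<partial>R)"
    by (intro nn_integral_cong nn_integral_multc[symmetric]) simp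
  also have "\<dots> = (\<integral>\<^sup>+r. \<integral>\<^sup>+x. \<integral>\<^sup>+X. Phi (r, X(i0:=x)) \<partial>?PI \<partial>cell_law \<mu> f g \<sigma> i0 \<partial>R)"
    by (simp only: inv mult_1)
  also have "\<dots> = (\<integral>\<^sup>+\<omega>. Phi \<omega> \<partial>obs_space R \<mu> f g \<sigma>)"
    by (rule nn_integral_split_coord[OF Phi, of i0, symmetric])
  finally show ?thesis .
qed

lemma nn_integral_unit_weight_cond:
  assumes F: "F \<in> borel_measurable (obs_space R \<mu> f g \<sigma>)"
    and C: "Measurable.pred (obs_space R \<mu> f g \<sigma>) C"
    and Cinv: "\<And>r Y x. C (r, Y(i0:=x)) = C (r, Y)"
    and Finv: "\<And>r Y x. \<not> C (r, Y) \<Longrightarrow> F (r, Y(i0:=x)) = F (r, Y)"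
    and q: "q \<in> borel_measurable \<mu>"
    and q1: "(\<integral>\<^sup>+x. q x \<partial>cell_law \<mu> f g \<sigma> i0) = 1"
  shows "(\<integral>\<^sup>+\<omega>. F \<omega> * q (snd \<omega> i0) \<partial>obs_space R \<mu> f g \<sigma>) =
         (\<integral>\<^sup>+\<omega>. F \<omega> * (if C \<omega> then q (snd \<omega> i0) else 1) \<partial>obs_space R \<mu> f g \<sigma>)"
proof -
  define Phi where "Phi = (\<lambda>\<omega>. if C \<omega> then 0 else F \<omega>)"
  have Phim: "Phi \<in> borel_measurable (obs_space R \<mu> f g \<sigma>)"
    unfolding Phi_def using C F by measurable
  have qm: "(\<lambda>\<omega>. q (snd \<omega> i0)) \<in> borel_measurable (obs_space R \<mu> f g \<sigma>)" by (rule coord_comp_measurable[OF q])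
  have Phiinv: "Phi (r, Y(i0:=x)) = Phi (r, Y)" for r Y x
    unfolding Phi_def using Cinv[of r Y x] Finv[of r Y x] by auto
  have A: "(\<lambda>\<omega>. if C \<omega> then F \<omega> * q (snd \<omega> i0) else 0) \<in> borel_measurable (obs_space R \<mu> f g \<sigma>)"
    using C F qm by measurable
  have "(\<integral>\<^sup>+\<omega>. F \<omega> * q (snd \<omega> i0) \<partial>obs_space R \<mu> f g \<sigma>) =
        (\<integral>\<^sup>+\<omega>. (if C \<omega> then F \<omega> * q (snd \<omega> i0) else 0) + Phi \<omega> * q (snd \<omega> i0) \<partial>obs_space R \<mu> f g \<sigma>)"
    by (intro nn_integral_cong) (simp add: Phi_def)
  also have "\<dots> = (\<integral>\<^sup>+\<omega>. (if C \<omega> then F \<omega> * q (snd \<omega> i0) else 0) \<partial>obs_space R \<mu> f g \<sigma>) +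
                  (\<integral>\<^sup>+\<omega>. Phi \<omega> * q (snd \<omega> i0) \<partial>obs_space R \<mu> f g \<sigma>)"
    by (rule nn_integral_add[OF A]) (intro borel_measurable_times_ennreal Phim qm)
  also have "(\<integral>\<^sup>+\<omega>. Phi \<omega> * q (snd \<omega> i0) \<partial>obs_space R \<mu> f g \<sigma>) = (\<integral>\<^sup>+\<omega>. Phi \<omega> \<partial>obs_space R \<mu> f g \<sigma>)"
    by (rule nn_integral_unit_weight[OF Phim Phiinv q q1])
  also have "(\<integral>\<^sup>+\<omega>. (if C \<omega> then F \<omega> * q (snd \<omega> i0) else 0) \<partial>obs_space R \<mu> f g \<sigma>) +
      (\<integral>\<^sup>+\<omega>. Phi \<omega> \<partial>obs_space R \<mu> f g \<sigma>) =
       (\<integral>\<^sup>+\<omega>. (if C \<omega> then F \<omega> * q (snd \<omega> i0) else 0) + Phi \<omega> \<partial>obs_space R \<mu> f g \<sigma>)"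
    by (rule nn_integral_add[OF A Phim, symmetric])
  also have "\<dots> = (\<integral>\<^sup>+\<omega>. F \<omega> * (if C \<omega> then q (snd \<omega> i0) else 1) \<partial>obs_space R \<mu> f g \<sigma>)"
    by (intro nn_integral_cong) (simp add: Phi_def)
  finally show ?thesis .
qed

lemma nn_integral_local_coords:
  assumes Psi: "Psi \<in> borel_measurable (obs_space R \<mu> f g \<sigma>)"
    and dep: "\<And>r Y Y'. (\<And>i. i \<in> J \<Longrightarrow> Y i = Y' i) \<Longrightarrow> Psi (r, Y) = Psi (r, Y')"
    and y0: "y0 \<in> space \<mu>"
  shows "(\<integral>\<^sup>+\<omega>. Psi \<omega> \<partial>obs_space R \<mu> f g \<sigma>) =
    (\<integral>\<^sup>+r. \<integral>\<^sup>+Z. Psi (r, \<lambda>i. if i \<in> J then Z i else y0) \<partial>(\<Pi>\<^sub>M i\<in>J. cell_law \<mu> f g \<sigma> i) \<partial>R)"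
proof -
  define ext where "ext = (\<lambda>Z :: 'a obs. \<lambda>i. if i \<in> J then Z i else y0)"
  let ?P = "\<Pi>\<^sub>M i\<in>UNIV. cell_law \<mu> f g \<sigma> i"
  let ?PJ = "\<Pi>\<^sub>M i\<in>J. cell_law \<mu> f g \<sigma> i"
  interpret P: prob_space ?P by (rule PiM_cell_law_prob)
  have Pm: "Psi \<in> borel_measurable (R \<Otimes>\<^sub>M ?P)" using Psi unfolding obs_space_def .
  have D: "distr ?P ?PJ (\<lambda>Y. restrict Y J) = ?PJ"
    using distr_PiM_reindex[of UNIV "cell_law \<mu> f g \<sigma>" id J] cell_law_prob
    by (simp add: restrict_def)
  have mr: "(\<lambda>Y. restrict Y J) \<in> measurable ?P ?PJ" by (rule measurable_restrict_subset) simp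
  have me: "ext \<in> measurable ?PJ ?P"
    unfolding ext_def
  proof (rule measurable_PiM_single')
    fix i :: "nat \<times> nat"
    show "(\<lambda>Z. if i \<in> J then Z i else y0) \<in> measurable ?PJ (cell_law \<mu> f g \<sigma> i)"
      by (cases "i \<in> J") (auto simp: y0)
  next
    show "(\<lambda>Z i. if i \<in> J then Z i else y0) \<in> space ?PJ \<rightarrow> (\<Pi>\<^sub>E i\<in>UNIV. space (cell_law \<mu> f g \<sigma> i))"
      using y0 by (auto simp: space_PiM)
  qed
  have inner: "(\<integral>\<^sup>+Y. Psi (r, Y) \<partial>?P) = (\<integral>\<^sup>+Z. Psi (r, ext Z) \<partial>?PJ)" if r: "r \<in> space R" for r
  proof -
    have m1: "(\<lambda>Z. Psi (r, ext Z)) \<in> borel_measurable ?PJ"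
      using measurable_Pair[OF measurable_const[OF r] me] Pm by (rule measurable_compose)
    have "(\<integral>\<^sup>+Y. Psi (r, Y) \<partial>?P) = (\<integral>\<^sup>+Y. Psi (r, ext (restrict Y J)) \<partial>?P)"
      by (intro nn_integral_cong dep) (simp add: ext_def)
    also have "\<dots> = (\<integral>\<^sup>+Z. Psi (r, ext Z) \<partial>?PJ)"
      using nn_integral_distr[OF mr, of "\<lambda>Z. Psi (r, ext Z)"] m1 D by simp
    finally show ?thesis .
  qed
  have "(\<integral>\<^sup>+\<omega>. Psi \<omega> \<partial>obs_space R \<mu> f g \<sigma>) = (\<integral>\<^sup>+r. \<integral>\<^sup>+Y. Psi (r, Y) \<partial>?P \<partial>R)"
    unfolding obs_space_def using P.nn_integral_fst[OF Pm] by simp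
  also have "\<dots> = (\<integral>\<^sup>+r. \<integral>\<^sup>+Z. Psi (r, ext Z) \<partial>?PJ \<partial>R)"
    by (rule nn_integral_cong) (rule inner)
  finally show ?thesis unfolding ext_def .
qed

lemma nn_integral_restrict_coords:
  assumes Psi: "Psi \<in> borel_measurable (obs_space R \<mu> f g \<sigma>)"
    and dep: "\<And>r Y Y'. (\<And>i. i \<in> J \<Longrightarrow> Y i = Y' i) \<Longrightarrow> Psi (r, Y) = Psi (r, Y')"
    and agree: "\<And>i. i \<in> J \<Longrightarrow> \<sigma> i = \<sigma>' i"
  shows "(\<integral>\<^sup>+\<omega>. Psi \<omega> \<partial>obs_space R \<mu> f g \<sigma>) = (\<integral>\<^sup>+\<omega>. Psi \<omega> \<partial>obs_space R \<mu> f g \<sigma>')"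
proof -
  interpret F: prob_space "density \<mu> (\<lambda>x. ennreal (f x))" by (rule f_prob)
  obtain y0 where y0: "y0 \<in> space \<mu>" using F.not_empty by auto
  have Psi': "Psi \<in> borel_measurable (obs_space R \<mu> f g \<sigma>')" by (rule measurable_obs_space[OF Psi])
  have "(\<Pi>\<^sub>M i\<in>J. cell_law \<mu> f g \<sigma> i) = (\<Pi>\<^sub>M i\<in>J. cell_law \<mu> f g \<sigma>' i)"
    by (intro PiM_cong) (auto simp: cell_law_def agree)
  then show ?thesis
    using nn_integral_local_coords[of Psi \<sigma> J, OF Psi dep y0]
      nn_integral_local_coords[of Psi \<sigma>' J, OF Psi' dep y0] by simp
qed

lemma AE_densities_positive: "AE \<omega> in obs_space R \<mu> f g \<sigma>. \<forall>i. 0 < f (snd \<omega> i) \<and> 0 < g (snd \<omega> i)"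
proof -
  let ?P = "\<Pi>\<^sub>M i\<in>UNIV. cell_law \<mu> f g \<sigma> i"
  interpret P: prob_space ?P by (rule PiM_cell_law_prob)
  interpret Rand: prob_space R by (rule R_prob)
  interpret PS: pair_sigma_finite R ?P ..
  have cell_positive: "AE x in cell_law \<mu> f g \<sigma> i. 0 < f x \<and> 0 < g x" for i
  proof -
    have "AE x in \<mu>. 0 < ennreal (cell_density f g (\<sigma> i) x) \<longrightarrow> 0 < f x \<and> 0 < g x"
      using f_g_vanish_together AE_space
    proof eventually_elim
      case (elim x)
      then show ?case using f_nonneg g_nonneg unfolding cell_density_def
        by (cases "\<sigma> i") (auto simp: less_le)
    qed
    then show ?thesis unfolding cell_law_def by (subst AE_density) auto
  qed
  have "AE Y in ?P. \<forall>i. 0 < f (Y i) \<and> 0 < g (Y i)"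
    unfolding AE_all_countable
  proof
    fix i :: "nat \<times> nat"
    show "AE Y in ?P. 0 < f (Y i) \<and> 0 < g (Y i)"
      by (rule AE_PiM_component[OF cell_law_prob _ cell_positive]) simp
  qed
  then have "AE \<omega> in R \<Otimes>\<^sub>M ?P. \<forall>i. 0 < f (snd \<omega> i) \<and> 0 < g (snd \<omega> i)"
  proof (intro PS.AE_pair_measure)
    have [measurable]: "(\<lambda>\<omega>. f (snd \<omega> i)) \<in> borel_measurable (R \<Otimes>\<^sub>M ?P)" for i
      using coord_comp_measurable[OF f_measurable, of i \<sigma>] unfolding obs_space_def .
    have [measurable]: "(\<lambda>\<omega>. g (snd \<omega> i)) \<in> borel_measurable (R \<Otimes>\<^sub>M ?P)" for i
      using coord_comp_measurable[OF g_measurable, of i \<sigma>] unfolding obs_space_def .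
    show "{x \<in> space (R \<Otimes>\<^sub>M ?P). \<forall>i. 0 < f (snd x i) \<and> 0 < g (snd x i)} \<in> sets (R \<Otimes>\<^sub>M ?P)"
      by measurable
  qed auto
  then show ?thesis unfolding obs_space_def .
qed

end

lemma length_hist[simp]: "length (hist P r Y n) = n"
  by (induction n) auto

lemma hist_take: "k \<le> n \<Longrightarrow> hist P r Y k = take k (hist P r Y n)"
proof (induction n)
  case 0 then show ?case by simp
next
  case (Suc n)
  show ?case
  proof (cases "k = Suc n")
    case True then show ?thesis by simp
  next
    case False then have "k \<le> n" using Suc by simp
    then show ?thesis using Suc by simp
  qed
qed

lemma hist_eq_le: "hist P r Y n = hist P r Y' n \<Longrightarrow> k \<le> n \<Longrightarrow> hist P r Y k = hist P r Y' k"
proof -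
  assume "hist P r Y n = hist P r Y' n" "k \<le> n"
  then show ?thesis using hist_take[of k n P r Y] hist_take[of k n P r Y'] by simp
qed

lemma hist_nth: "t < n \<Longrightarrow> hist P r Y n ! t = obs_at (sel P r (hist P r Y t)) Y (Suc t)"
proof (induction n)
  case 0 then show ?case by simp
next
  case (Suc n)
  then show ?case by (cases "t = n") (auto simp: nth_append)
qed

lemma hist_local: "(\<And>i. fst i \<in> {1..s} \<Longrightarrow> Y i = Y' i) \<Longrightarrow> hist P r Y s = hist P r Y' s"
proof (induction s)
  case 0 then show ?case by simp
next
  case (Suc s)
  then have IH: "hist P r Y s = hist P r Y' s" by auto
  have "obs_at (sel P r (hist P r Y s)) Y (Suc s) = obs_at (sel P r (hist P r Y' s)) Y' (Suc s)"
    unfolding IH obs_at_def using Suc.prems by (auto simp: fun_eq_iff)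
  then show ?case using IH by simp
qed

lemma hist_unobs:
  assumes "c \<notin> phi P r Y t"
  shows "hist P r (Y((t,c):=x)) s = hist P r Y s"
proof (induction s)
  case 0 then show ?case by simp
next
  case (Suc s)
  have "obs_at (sel P r (hist P r Y s)) (Y((t,c):=x)) (Suc s) = obs_at (sel P r (hist P r Y s)) Y (Suc s)"
  proof -
    have "(Y((t,c):=x)) (Suc s, k) = Y (Suc s, k)" if "k \<in> sel P r (hist P r Y s)" for k
    proof (cases "t = Suc s \<and> k = c")
      case True
      then have "c \<in> phi P r Y t" using that by (simp add: phi_def)
      then show ?thesis using assms by simp
    next
      case False then show ?thesis by auto
    qed
    then show ?thesis unfolding obs_at_def by (auto simp: fun_eq_iff)
  qed
  then show ?case using Suc.IH by (metis hist.simps(2))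
qed

lemma phi_unobs: "c \<notin> phi P r Y t \<Longrightarrow> phi P r (Y((t,c):=x)) s = phi P r Y s"
proof -
  assume a: "c \<notin> phi P r Y t"
  show ?thesis unfolding phi_def using hist_unobs[OF a, of x "s-1"] by simp
qed

(* The cells observed at time t+1 are chosen before the observations of time t+1 are made. *)
lemma phi_fun_upd_same_time: "phi P r (Y((Suc k, c):=x)) (Suc k) = phi P r Y (Suc k)"
proof -
  have "hist P r (Y((Suc k, c):=x)) k = hist P r Y k" by (rule hist_local) auto
  then show ?thesis by (simp add: phi_def)
qed

lemma phi_eq: "hist P r Y n = hist P r Y' n \<Longrightarrow> t \<le> n + 1 \<Longrightarrow> phi P r Y t = phi P r Y' t"
proof -
  assume a: "hist P r Y n = hist P r Y' n" "t \<le> n + 1"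
  have "hist P r Y (t-1) = hist P r Y' (t-1)" using a by (intro hist_eq_le[OF a(1)]) simp
  then show ?thesis by (simp add: phi_def)
qed

lemma obs_eq:
  assumes "hist P r Y n = hist P r Y' n" "t \<in> {1..n}" "k \<in> phi P r Y t"
  shows "Y (t, k) = Y' (t, k)"
proof -
  have "hist P r Y n ! (t - 1) = hist P r Y' n ! (t - 1)" using assms by simp
  moreover have "hist P r Y (t-1) = hist P r Y' (t-1)" using assms by (intro hist_eq_le[OF assms(1)]) auto
  moreover have tn: "t - 1 < n" using assms(2) by auto
  ultimately have "obs_at (phi P r Y t) Y t = obs_at (phi P r Y t) Y' t"
    using assms hist_nth[of "t-1" n P r Y] hist_nth[of "t-1" n P r Y'] by (simp add: phi_def)
  then have "obs_at (phi P r Y t) Y t k = obs_at (phi P r Y t) Y' t k" by simp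
  then show ?thesis using assms(3) by (simp add: obs_at_def)
qed

lemma Ssum_eq:
  assumes "hist P r Y n = hist P r Y' n"
  shows "Ssum f g P r Y k n = Ssum f g P r Y' k n"
  unfolding Ssum_def
proof (rule sum.cong[OF refl])
  fix t assume t: "t \<in> {1..n}"
  then have "phi P r Y t = phi P r Y' t" using phi_eq[OF assms] by auto
  then show "(if k \<in> phi P r Y t then llr f g (Y (t, k)) else 0) =
      (if k \<in> phi P r Y' t then llr f g (Y' (t, k)) else 0)"
    using obs_eq[OF assms t] by auto
qed

definition hist_determined :: "('r, 'a) policy \<Rightarrow> nat \<Rightarrow> ('r \<times> 'a obs \<Rightarrow> 'b) \<Rightarrow> bool" where
  "hist_determined P n Psi \<longleftrightarrow> (\<forall>r Y Y'. hist P r Y n = hist P r Y' n \<longrightarrow> Psi (r, Y) = Psi (r, Y'))"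

lemma hist_determined_fun_upd: "hist_determined P n Psi \<Longrightarrow> c \<notin> phi P r Y t \<Longrightarrow> Psi (r, Y((t,c):=x)) = Psi (r, Y)"
  unfolding hist_determined_def using hist_unobs[of c P r Y t x n] by blast

definition lr_gf :: "('a \<Rightarrow> real) \<Rightarrow> ('a \<Rightarrow> real) \<Rightarrow> 'a \<Rightarrow> ennreal" where
  "lr_gf f g y = ennreal (cell_density f g True y / cell_density f g False y)"

definition lr_fg :: "('a \<Rightarrow> real) \<Rightarrow> ('a \<Rightarrow> real) \<Rightarrow> 'a \<Rightarrow> ennreal" where
  "lr_fg f g y = ennreal (cell_density f g False y / cell_density f g True y)"

definition hybrid_pattern :: "nat \<Rightarrow> nat \<Rightarrow> nat \<Rightarrow> nat \<times> nat \<Rightarrow> bool" where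
  "hybrid_pattern m j n = (\<lambda>i. if fst i \<in> {1..n} then snd i = j else snd i = m)"

lemma hybrid_pattern_0: "hybrid_pattern m j 0 = (\<lambda>i. snd i = m)" by (simp add: hybrid_pattern_def fun_eq_iff)

definition swap_lr :: "('a \<Rightarrow> real) \<Rightarrow> ('a \<Rightarrow> real) \<Rightarrow> nat \<Rightarrow> nat \<Rightarrow> nat \<Rightarrow> 'r \<times> 'a obs \<Rightarrow> ennreal" where
  "swap_lr f g m j t \<omega> = lr_gf f g (snd \<omega> (t,j)) * lr_fg f g (snd \<omega> (t,m))"

definition swap_lr_prod :: "('a \<Rightarrow> real) \<Rightarrow> ('a \<Rightarrow> real) \<Rightarrow> nat \<Rightarrow> nat \<Rightarrow> nat \<Rightarrow> 'r \<times> 'a obs \<Rightarrow> ennreal" where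
  "swap_lr_prod f g m j n \<omega> = (\<Prod>t\<in>{1..n}. swap_lr f g m j t \<omega>)"

definition observed_swap_lr :: "('a \<Rightarrow> real) \<Rightarrow> ('a \<Rightarrow> real) \<Rightarrow> ('r, 'a) policy \<Rightarrow>
    nat \<Rightarrow> nat \<Rightarrow> nat \<Rightarrow> 'r \<times> 'a obs \<Rightarrow> ennreal" where
  "observed_swap_lr f g P m j t \<omega> = (if j \<in> phi P (fst \<omega>) (snd \<omega>) t then lr_gf f g (snd \<omega> (t,j)) else 1) *
                        (if m \<in> phi P (fst \<omega>) (snd \<omega>) t then lr_fg f g (snd \<omega> (t,m)) else 1)"

definition mixed_swap_lr :: "('a \<Rightarrow> real) \<Rightarrow> ('a \<Rightarrow> real) \<Rightarrow> ('r, 'a) policy \<Rightarrow>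
    nat \<Rightarrow> nat \<Rightarrow> nat \<Rightarrow> nat \<Rightarrow> 'r \<times> 'a obs \<Rightarrow> ennreal" where
  "mixed_swap_lr f g P m j n k \<omega> =
     (\<Prod>t\<in>{1..n}. if t \<le> k then observed_swap_lr f g P m j t \<omega> else swap_lr f g m j t \<omega>)"

lemma observed_swap_lr_fun_upd:
  "t' \<noteq> t \<Longrightarrow> c \<notin> phi P r Y t \<Longrightarrow>
     observed_swap_lr f g P m j t' (r, Y((t,c):=x)) = observed_swap_lr f g P m j t' (r, Y)"
  unfolding observed_swap_lr_def using phi_unobs[of c P r Y t x t'] by simp

lemma swap_lr_fun_upd: "t' \<noteq> t \<Longrightarrow> swap_lr f g m j t' (r, Y((t,c):=x)) = swap_lr f g m j t' (r, Y)"
  unfolding swap_lr_def by simp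

lemma mixed_swap_lr_eq_exp:
  assumes good: "\<forall>i. 0 < f (snd \<omega> i) \<and> 0 < g (snd \<omega> i)"
  shows "mixed_swap_lr f g P m j n n \<omega> =
    ennreal (exp (Ssum f g P (fst \<omega>) (snd \<omega>) j n - Ssum f g P (fst \<omega>) (snd \<omega>) m n))"
proof -
  let ?a = "\<lambda>t. (if j \<in> phi P (fst \<omega>) (snd \<omega>) t then llr f g (snd \<omega> (t, j)) else 0)"
  let ?b = "\<lambda>t. (if m \<in> phi P (fst \<omega>) (snd \<omega>) t then llr f g (snd \<omega> (t, m)) else 0)"
  have lr_gf_exp: "lr_gf f g (snd \<omega> i) = ennreal (exp (llr f g (snd \<omega> i)))" for i
    using good[rule_format, of i] by (simp add: lr_gf_def cell_density_def llr_def)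
  have lr_fg_exp: "lr_fg f g (snd \<omega> i) = ennreal (exp (- llr f g (snd \<omega> i)))" for i
    using good[rule_format, of i] by (simp add: lr_fg_def cell_density_def llr_def exp_minus)
  have observed_exp: "observed_swap_lr f g P m j t \<omega> = ennreal (exp (?a t - ?b t))" for t
    unfolding observed_swap_lr_def lr_gf_exp lr_fg_exp
    by (simp add: exp_diff ennreal_mult[symmetric] divide_inverse exp_minus)
  have "mixed_swap_lr f g P m j n n \<omega> = (\<Prod>t\<in>{1..n}. ennreal (exp (?a t - ?b t)))"
    unfolding mixed_swap_lr_def observed_exp by (intro prod.cong) auto
  also have "\<dots> = ennreal (\<Prod>t\<in>{1..n}. exp (?a t - ?b t))"
    by (rule prod_ennreal) simp
  also have "\<dots> = ennreal (exp (\<Sum>t\<in>{1..n}. ?a t - ?b t))"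
    by (simp add: exp_sum)
  also have "(\<Sum>t\<in>{1..n}. ?a t - ?b t) = Ssum f g P (fst \<omega>) (snd \<omega>) j n - Ssum f g P (fst \<omega>) (snd \<omega>) m n"
    unfolding Ssum_def by (simp add: sum_subtractf)
  finally show ?thesis .
qed

context search_model
begin

lemma lr_gf_measurable: "lr_gf f g \<in> borel_measurable \<mu>" unfolding lr_gf_def by measurable

lemma lr_fg_measurable: "lr_fg f g \<in> borel_measurable \<mu>" unfolding lr_fg_def by measurable

lemma swap_lr_measurable: "swap_lr f g m j t \<in> borel_measurable (obs_space R \<mu> f g \<sigma>)"
  unfolding swap_lr_def
  by (intro borel_measurable_times_ennreal coord_comp_measurable lr_gf_measurable lr_fg_measurable)

lemma llr_measurable: "llr f g \<in> borel_measurable \<mu>" unfolding llr_def by measurable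

lemma lr_fg_unit_mean: "\<sigma> i \<Longrightarrow> (\<integral>\<^sup>+y. lr_fg f g y \<partial>cell_law \<mu> f g \<sigma> i) = 1"
proof -
  assume s: "\<sigma> i"
  interpret F: prob_space "density \<mu> (\<lambda>x. ennreal (f x))" by (rule f_prob)
  have "(\<integral>\<^sup>+y. 1 \<partial>density \<mu> (\<lambda>x. ennreal (cell_density f g False x))) =
        (\<integral>\<^sup>+y. ennreal (cell_density f g False y / cell_density f g True y) * 1
           \<partial>density \<mu> (\<lambda>x. ennreal (cell_density f g True x)))"
    by (rule nn_integral_density_ratio) simp
  moreover have "(\<integral>\<^sup>+y. 1 \<partial>density \<mu> (\<lambda>x. ennreal (cell_density f g False x))) = 1"
    using F.emeasure_space_1 by (simp add: cell_density_def)
  ultimately show ?thesis using s by (simp add: cell_law_def lr_fg_def)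
qed

lemma lr_gf_unit_mean: "\<not> \<sigma> i \<Longrightarrow> (\<integral>\<^sup>+y. lr_gf f g y \<partial>cell_law \<mu> f g \<sigma> i) = 1"
proof -
  assume s: "\<not> \<sigma> i"
  interpret G: prob_space "density \<mu> (\<lambda>x. ennreal (g x))" by (rule g_prob)
  have "(\<integral>\<^sup>+y. 1 \<partial>density \<mu> (\<lambda>x. ennreal (cell_density f g True x))) =
        (\<integral>\<^sup>+y. ennreal (cell_density f g True y / cell_density f g False y) * 1
           \<partial>density \<mu> (\<lambda>x. ennreal (cell_density f g False x)))"
    by (rule nn_integral_density_ratio) simp
  moreover have "(\<integral>\<^sup>+y. 1 \<partial>density \<mu> (\<lambda>x. ennreal (cell_density f g True x))) = 1"
    using G.emeasure_space_1 by (simp add: cell_density_def)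
  ultimately show ?thesis using s by (simp add: cell_law_def lr_gf_def)
qed

lemma nn_integral_hybrid_pattern:
  assumes jm: "j \<noteq> m" and Psi: "Psi \<in> borel_measurable (obs_space R \<mu> f g \<sigma>)"
  shows "(\<integral>\<^sup>+\<omega>. Psi \<omega> \<partial>obs_space R \<mu> f g (hybrid_pattern m j n)) =
    (\<integral>\<^sup>+\<omega>. Psi \<omega> *
      swap_lr_prod f g m j n \<omega> \<partial>obs_space R \<mu> f g (hybrid_pattern m j 0))"
  using Psi
proof (induction n arbitrary: Psi)
  case 0
  then show ?case by (simp add: swap_lr_prod_def)
next
  case (Suc n)
  let ?s1 = "(hybrid_pattern m j n)((Suc n, j) := True)"
  have pattern_step: "hybrid_pattern m j (Suc n) = ?s1((Suc n, m) := False)"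
    using jm by (auto simp: hybrid_pattern_def fun_eq_iff)
  have s1_m: "?s1 (Suc n, m) = True" using jm by (simp add: hybrid_pattern_def)
  have pattern_j: "hybrid_pattern m j n (Suc n, j) = False" using jm by (simp add: hybrid_pattern_def)
  have Psi_s1: "Psi \<in> borel_measurable (obs_space R \<mu> f g ?s1)" using measurable_obs_space[OF Suc.prems] .
  have "(\<integral>\<^sup>+\<omega>. Psi \<omega> \<partial>obs_space R \<mu> f g (hybrid_pattern m j (Suc n))) =
        (\<integral>\<^sup>+\<omega>. Psi \<omega> * lr_fg f g (snd \<omega> (Suc n, m)) \<partial>obs_space R \<mu> f g ?s1)"
    unfolding pattern_step using nn_integral_change_coord_law[OF Psi_s1, of "(Suc n, m)" False] s1_m by (simp add: lr_fg_def)
  also have "\<dots> = (\<integral>\<^sup>+\<omega>. (Psi \<omega> * lr_fg f g (snd \<omega> (Suc n, m))) * lr_gf f g (snd \<omega> (Suc n, j))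
      \<partial>obs_space R \<mu> f g (hybrid_pattern m j n))"
  proof -
    have Psi_lr_fg: "(\<lambda>\<omega>. Psi \<omega> * lr_fg f g (snd \<omega> (Suc n, m)))
        \<in> borel_measurable (obs_space R \<mu> f g (hybrid_pattern m j n))"
      by (intro borel_measurable_times_ennreal measurable_obs_space[OF Suc.prems]
          coord_comp_measurable lr_fg_measurable)
    show ?thesis using nn_integral_change_coord_law[OF Psi_lr_fg, of "(Suc n, j)" True] pattern_j by (simp add: lr_gf_def)
  qed
  also have "\<dots> = (\<integral>\<^sup>+\<omega>. ((Psi \<omega> * lr_fg f g (snd \<omega> (Suc n, m))) * lr_gf f g (snd \<omega> (Suc n, j))) *
      swap_lr_prod f g m j n \<omega> \<partial>obs_space R \<mu> f g (hybrid_pattern m j 0))"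
    by (rule Suc.IH)
      (intro borel_measurable_times_ennreal Suc.prems coord_comp_measurable lr_fg_measurable lr_gf_measurable)
  also have "\<dots> = (\<integral>\<^sup>+\<omega>. Psi \<omega> * swap_lr_prod f g m j (Suc n) \<omega> \<partial>obs_space R \<mu> f g (hybrid_pattern m j 0))"
    by (simp add: swap_lr_prod_def swap_lr_def ac_simps)
  finally show ?case .
qed

end

locale search_policy = search_model +
  fixes P :: "('r, 'a) policy"
  assumes sel_measurable[measurable]:
      "(\<lambda>\<omega>. sel P (fst \<omega>) (hist P (fst \<omega>) (snd \<omega>) n)) \<in> obs_space R \<mu> f g \<sigma> \<rightarrow>\<^sub>M count_space UNIV"
    and stp_measurable[measurable]:
      "(\<lambda>\<omega>. stp P (fst \<omega>) (hist P (fst \<omega>) (snd \<omega>) n)) \<in> obs_space R \<mu> f g \<sigma> \<rightarrow>\<^sub>M count_space UNIV"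
    and dec_measurable[measurable]:
      "(\<lambda>\<omega>. dec P (fst \<omega>) (hist P (fst \<omega>) (snd \<omega>) n)) \<in> obs_space R \<mu> f g \<sigma> \<rightarrow>\<^sub>M count_space UNIV"
begin

lemma phi_member_measurable[measurable]:
  "Measurable.pred (obs_space R \<mu> f g \<sigma>) (\<lambda>\<omega>. c \<in> phi P (fst \<omega>) (snd \<omega>) t)"
proof -
  have "(\<lambda>\<omega>. phi P (fst \<omega>) (snd \<omega>) t) \<in> obs_space R \<mu> f g \<sigma> \<rightarrow>\<^sub>M count_space UNIV"
    unfolding phi_def by (rule sel_measurable)
  then show ?thesis
    by (rule measurable_compose[where g="\<lambda>A. c \<in> A"]) simp
qed

lemma observed_swap_lr_measurable[measurable]:
  "observed_swap_lr f g P m j t \<in> borel_measurable (obs_space R \<mu> f g \<sigma>)"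
proof -
  note [measurable] = coord_comp_measurable[OF lr_gf_measurable] coord_comp_measurable[OF lr_fg_measurable]
  show ?thesis unfolding observed_swap_lr_def by measurable
qed

lemma mixed_swap_lr_measurable[measurable]:
  "mixed_swap_lr f g P m j n k \<in> borel_measurable (obs_space R \<mu> f g \<sigma>)"
  unfolding mixed_swap_lr_def
proof (intro borel_measurable_prod_ennreal)
  fix t
  show "(\<lambda>\<omega>. if t \<le> k then observed_swap_lr f g P m j t \<omega> else swap_lr f g m j t \<omega>)
      \<in> borel_measurable (obs_space R \<mu> f g \<sigma>)"
    by (cases "t \<le> k") (simp_all add: swap_lr_measurable)
qed

lemma Ssum_measurable[measurable]:
  "(\<lambda>\<omega>. Ssum f g P (fst \<omega>) (snd \<omega>) c n) \<in> borel_measurable (obs_space R \<mu> f g \<sigma>)"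
proof -
  note [measurable] = coord_comp_measurable[OF llr_measurable]
  show ?thesis unfolding Ssum_def by measurable
qed

lemma nn_integral_unobserved_weight:
  assumes G: "G \<in> borel_measurable (obs_space R \<mu> f g \<sigma>)"
    and Ginv: "\<And>r Y x. c \<notin> phi P r Y (Suc k) \<Longrightarrow> G (r, Y((Suc k, c) := x)) = G (r, Y)"
    and q: "q \<in> borel_measurable \<mu>" and q1: "(\<integral>\<^sup>+y. q y \<partial>cell_law \<mu> f g \<sigma> (Suc k, c)) = 1"
  shows "(\<integral>\<^sup>+\<omega>. G \<omega> * q (snd \<omega> (Suc k, c)) \<partial>obs_space R \<mu> f g \<sigma>) =
    (\<integral>\<^sup>+\<omega>. G \<omega> * (if c \<in> phi P (fst \<omega>) (snd \<omega>) (Suc k) then q (snd \<omega> (Suc k, c)) else 1)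
       \<partial>obs_space R \<mu> f g \<sigma>)"
proof (rule nn_integral_unit_weight_cond[OF G phi_member_measurable _ _ q q1])
  show "(c \<in> phi P (fst (r, Y((Suc k, c) := x))) (snd (r, Y((Suc k, c) := x))) (Suc k)) =
      (c \<in> phi P (fst (r, Y)) (snd (r, Y)) (Suc k))" for r Y x
    by (simp add: phi_fun_upd_same_time)
  show "G (r, Y((Suc k, c) := x)) = G (r, Y)"
    if "c \<notin> phi P (fst (r, Y)) (snd (r, Y)) (Suc k)" for r Y x
    using Ginv that by simp
qed

(* One step of the interpolation: at time k+1 the full ratio can be replaced by the observed
   one, because the ratios of the unobserved cells integrate out. *)
lemma nn_integral_mixed_swap_lr_step:
  assumes jm: "j \<noteq> m" and Psi: "Psi \<in> borel_measurable (obs_space R \<mu> f g (hybrid_pattern m j 0))"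
    and hd: "hist_determined P n Psi" and k: "Suc k \<le> n"
  shows "(\<integral>\<^sup>+\<omega>. Psi \<omega> * mixed_swap_lr f g P m j n k \<omega> \<partial>obs_space R \<mu> f g (hybrid_pattern m j 0)) =
         (\<integral>\<^sup>+\<omega>. Psi \<omega> * mixed_swap_lr f g P m j n (Suc k) \<omega> \<partial>obs_space R \<mu> f g (hybrid_pattern m j 0))"
proof -
  let ?M = "obs_space R \<mu> f g (hybrid_pattern m j 0)"
  let ?t = "Suc k"
  define Rest where "Rest = (\<lambda>\<omega>. \<Prod>t\<in>{1..n}-{?t}.
      if t \<le> k then observed_swap_lr f g P m j t \<omega> else swap_lr f g m j t \<omega>)"
  define G where "G = (\<lambda>\<omega>. Psi \<omega> * Rest \<omega>)"
  have tin: "?t \<in> {1..n}" using k by simp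
  have X1: "mixed_swap_lr f g P m j n k \<omega> = swap_lr f g m j ?t \<omega> * Rest \<omega>" for \<omega>
    unfolding mixed_swap_lr_def Rest_def by (subst prod.remove[OF _ tin]) auto
  have X2: "mixed_swap_lr f g P m j n (Suc k) \<omega> = observed_swap_lr f g P m j ?t \<omega> * Rest \<omega>" for \<omega>
  proof -
    have "(\<Prod>t\<in>{1..n}-{?t}. if t \<le> Suc k then observed_swap_lr f g P m j t \<omega> else swap_lr f g m j t \<omega>)
        = Rest \<omega>"
      unfolding Rest_def by (intro prod.cong) auto
    then show ?thesis unfolding mixed_swap_lr_def by (subst prod.remove[OF _ tin]) auto
  qed
  note [measurable] = swap_lr_measurable Psi coord_comp_measurable[OF lr_gf_measurable]
    coord_comp_measurable[OF lr_fg_measurable]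
  have Gm[measurable]: "G \<in> borel_measurable ?M" unfolding G_def Rest_def by measurable
  have Rinv: "Rest (r, Y((?t,c):=x)) = Rest (r, Y)" if "c \<notin> phi P r Y ?t" for r Y c x
    unfolding Rest_def using observed_swap_lr_fun_upd[OF _ that] swap_lr_fun_upd
    by (intro prod.cong) auto
  have Ginv: "G (r, Y((?t,c):=x)) = G (r, Y)" if "c \<notin> phi P r Y ?t" for r Y c x
    unfolding G_def using Rinv[OF that] hist_determined_fun_upd[OF hd that] by simp
  have G_lr_gf_meas: "(\<lambda>\<omega>. G \<omega> * lr_gf f g (snd \<omega> (?t, j))) \<in> borel_measurable ?M"
    by measurable
  have G_obs_meas: "(\<lambda>\<omega>. G \<omega> * (if m \<in> phi P (fst \<omega>) (snd \<omega>) ?t then lr_fg f g (snd \<omega> (?t, m)) else 1))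
      \<in> borel_measurable ?M"
    by measurable
  have "(\<integral>\<^sup>+\<omega>. Psi \<omega> * mixed_swap_lr f g P m j n k \<omega> \<partial>?M) =
        (\<integral>\<^sup>+\<omega>. (G \<omega> * lr_gf f g (snd \<omega> (?t, j))) * lr_fg f g (snd \<omega> (?t, m)) \<partial>?M)"
    by (intro nn_integral_cong) (simp add: X1 G_def swap_lr_def ac_simps)
  also have "\<dots> = (\<integral>\<^sup>+\<omega>. (G \<omega> * lr_gf f g (snd \<omega> (?t, j))) *
       (if m \<in> phi P (fst \<omega>) (snd \<omega>) ?t then lr_fg f g (snd \<omega> (?t, m)) else 1) \<partial>?M)"
    by (rule nn_integral_unobserved_weight[OF G_lr_gf_meas])
      (use Ginv jm in \<open>auto simp: lr_fg_measurable lr_fg_unit_mean hybrid_pattern_def\<close>)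
  also have "\<dots> = (\<integral>\<^sup>+\<omega>. (G \<omega> * (if m \<in> phi P (fst \<omega>) (snd \<omega>) ?t then lr_fg f g (snd \<omega> (?t, m)) else 1)) *
       lr_gf f g (snd \<omega> (?t, j)) \<partial>?M)"
    by (intro nn_integral_cong) (simp add: ac_simps)
  also have "\<dots> = (\<integral>\<^sup>+\<omega>. (G \<omega> * (if m \<in> phi P (fst \<omega>) (snd \<omega>) ?t then lr_fg f g (snd \<omega> (?t, m)) else 1)) *
       (if j \<in> phi P (fst \<omega>) (snd \<omega>) ?t then lr_gf f g (snd \<omega> (?t, j)) else 1) \<partial>?M)"
    by (rule nn_integral_unobserved_weight[OF G_obs_meas])
      (use Ginv jm in \<open>auto simp: phi_fun_upd_same_time lr_gf_measurable lr_gf_unit_mean hybrid_pattern_def\<close>)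
  also have "\<dots> = (\<integral>\<^sup>+\<omega>. Psi \<omega> * mixed_swap_lr f g P m j n (Suc k) \<omega> \<partial>?M)"
    by (intro nn_integral_cong) (simp add: X2 G_def observed_swap_lr_def ac_simps)
  finally show ?thesis .
qed

lemma nn_integral_mixed_swap_lr:
  assumes jm: "j \<noteq> m" and Psi: "Psi \<in> borel_measurable (obs_space R \<mu> f g (hybrid_pattern m j 0))"
    and hd: "hist_determined P n Psi" and k: "k \<le> n"
  shows "(\<integral>\<^sup>+\<omega>. Psi \<omega> * swap_lr_prod f g m j n \<omega> \<partial>obs_space R \<mu> f g (hybrid_pattern m j 0)) =
         (\<integral>\<^sup>+\<omega>. Psi \<omega> * mixed_swap_lr f g P m j n k \<omega> \<partial>obs_space R \<mu> f g (hybrid_pattern m j 0))"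
  using k
proof (induction k)
  case 0
  have "swap_lr_prod f g m j n \<omega> = mixed_swap_lr f g P m j n 0 \<omega>" for \<omega>
    unfolding swap_lr_prod_def mixed_swap_lr_def by (intro prod.cong) auto
  then show ?case by simp
next
  case (Suc k)
  then show ?case using nn_integral_mixed_swap_lr_step[OF jm Psi hd Suc.prems] by simp
qed

lemma likelihood_ratio_identity:
  assumes jm: "j \<noteq> m" and Psi: "Psi \<in> borel_measurable (obs_space R \<mu> f g \<sigma>)"
    and hd: "hist_determined P n Psi"
  shows "(\<integral>\<^sup>+\<omega>. Psi \<omega> \<partial>obs_space R \<mu> f g (\<lambda>i. snd i = j)) =
         (\<integral>\<^sup>+\<omega>. Psi \<omega> * mixed_swap_lr f g P m j n n \<omega> \<partial>obs_space R \<mu> f g (\<lambda>i. snd i = m))"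
proof -
  have "(\<integral>\<^sup>+\<omega>. Psi \<omega> \<partial>obs_space R \<mu> f g (\<lambda>i. snd i = j)) =
      (\<integral>\<^sup>+\<omega>. Psi \<omega> \<partial>obs_space R \<mu> f g (hybrid_pattern m j n))"
  proof (rule nn_integral_restrict_coords[where J="{i. fst i \<in> {1..n}}"])
    show "Psi \<in> borel_measurable (obs_space R \<mu> f g (\<lambda>i. snd i = j))"
      by (rule measurable_obs_space[OF Psi])
    show "Psi (r, Y) = Psi (r, Y')" if "\<And>i. i \<in> {i. fst i \<in> {1..n}} \<Longrightarrow> Y i = Y' i" for r Y Y'
    proof -
      have "hist P r Y n = hist P r Y' n" by (rule hist_local) (use that in auto)
      then show ?thesis using hd unfolding hist_determined_def by blast
    qed
    show "(snd i = j) = hybrid_pattern m j n i" if "i \<in> {i. fst i \<in> {1..n}}" for i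
      using that by (simp add: hybrid_pattern_def)
  qed
  also have "\<dots> = (\<integral>\<^sup>+\<omega>. Psi \<omega> *
      swap_lr_prod f g m j n \<omega> \<partial>obs_space R \<mu> f g (hybrid_pattern m j 0))"
    by (rule nn_integral_hybrid_pattern[OF jm Psi])
  also have "\<dots> = (\<integral>\<^sup>+\<omega>. Psi \<omega> * mixed_swap_lr f g P m j n n \<omega> \<partial>obs_space R \<mu> f g (hybrid_pattern m j 0))"
    by (rule nn_integral_mixed_swap_lr[OF jm measurable_obs_space[OF Psi] hd order.refl])
  finally show ?thesis unfolding hybrid_pattern_0 .
qed

lemma change_measure_bound:
  assumes jm: "j \<noteq> m" and Qm: "Measurable.pred (obs_space R \<mu> f g \<sigma>) Q"
    and hd: "hist_determined P n Q"
  shows "emeasure (obs_space R \<mu> f g (\<lambda>i. snd i = m))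
           {\<omega> \<in> space (obs_space R \<mu> f g (\<lambda>i. snd i = m)). Q \<omega> \<and>
               Ssum f g P (fst \<omega>) (snd \<omega>) m n - Ssum f g P (fst \<omega>) (snd \<omega>) j n < L}
         \<le> ennreal (exp L) * emeasure (obs_space R \<mu> f g (\<lambda>i. snd i = j))
              {\<omega> \<in> space (obs_space R \<mu> f g (\<lambda>i. snd i = j)). Q \<omega>}"
proof -
  let ?Pm = "obs_space R \<mu> f g (\<lambda>i. snd i = m)"
  let ?Pj = "obs_space R \<mu> f g (\<lambda>i. snd i = j)"
  let ?Sm = "\<lambda>\<omega>. Ssum f g P (fst \<omega>) (snd \<omega>) m n"
  let ?Sj = "\<lambda>\<omega>. Ssum f g P (fst \<omega>) (snd \<omega>) j n"
  define A where "A = {\<omega>. Q \<omega> \<and> ?Sm \<omega> - ?Sj \<omega> < L}"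
  have Q_any[measurable]: "Measurable.pred (obs_space R \<mu> f g \<sigma>') Q" for \<sigma>'
    using Qm by (subst measurable_cong_sets[OF sets_obs_space refl])
  have A_sets: "A \<inter> space (obs_space R \<mu> f g \<sigma>') \<in> sets (obs_space R \<mu> f g \<sigma>')" for \<sigma>'
    unfolding A_def by measurable
  have A_meas: "(indicator A :: _ \<Rightarrow> ennreal) \<in> borel_measurable ?Pm"
    using A_sets by (simp add: borel_measurable_indicator_iff)
  have hdA: "hist_determined P n (indicator A :: _ \<Rightarrow> ennreal)"
    unfolding hist_determined_def
  proof (intro allI impI)
    fix r Y Y' assume h: "hist P r Y n = hist P r Y' n"
    then have "Q (r, Y) = Q (r, Y')" using hd unfolding hist_determined_def by blast
    with Ssum_eq[OF h] show "(indicator A (r, Y) :: ennreal) = indicator A (r, Y')"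
      by (simp add: A_def indicator_def)
  qed
  have "emeasure ?Pm (A \<inter> space ?Pm) = (\<integral>\<^sup>+\<omega>. indicator A \<omega> \<partial>?Pm)"
    by (rule nn_integral_indicator'[OF A_sets, symmetric])
  also have "\<dots> \<le> (\<integral>\<^sup>+\<omega>. ennreal (exp L) * (indicator A \<omega> * mixed_swap_lr f g P m j n n \<omega>) \<partial>?Pm)"
  proof (rule nn_integral_mono_AE)
    show "AE \<omega> in ?Pm. indicator A \<omega> \<le> ennreal (exp L) * (indicator A \<omega> * mixed_swap_lr f g P m j n n \<omega>)"
      using AE_densities_positive
    proof eventually_elim
      case (elim \<omega>)
      have "\<omega> \<in> A \<Longrightarrow> 1 \<le> exp L * exp (?Sj \<omega> - ?Sm \<omega>)"
        by (simp add: A_def exp_add[symmetric])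
      then show ?case
        by (simp add: mixed_swap_lr_eq_exp[OF elim] ennreal_mult[symmetric] ennreal_leI indicator_def)
    qed
  qed
  also have "\<dots> = ennreal (exp L) * (\<integral>\<^sup>+\<omega>. indicator A \<omega> * mixed_swap_lr f g P m j n n \<omega> \<partial>?Pm)"
    by (intro nn_integral_cmult borel_measurable_times_ennreal A_meas mixed_swap_lr_measurable)
  also have "\<dots> = ennreal (exp L) * (\<integral>\<^sup>+\<omega>. indicator A \<omega> \<partial>?Pj)"
    using likelihood_ratio_identity[OF jm A_meas hdA] by simp
  also have "\<dots> = ennreal (exp L) * emeasure ?Pj (A \<inter> space ?Pj)"
    by (simp add: nn_integral_indicator'[OF A_sets])
  also have "\<dots> \<le> ennreal (exp L) * emeasure ?Pj {\<omega> \<in> space ?Pj. Q \<omega>}"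
    by (intro mult_left_mono emeasure_mono) (auto simp: A_def)
  finally show ?thesis
    by (simp add: A_def Int_def conj_commute)
qed

end

lemma tau_eqI:
  assumes "stp P r (hist P r Y n)" "\<forall>k<n. \<not> stp P r (hist P r Y k)"
  shows "tau P r Y = n"
  unfolding tau_def
proof (rule Least_equality)
  show "stp P r (hist P r Y n)" by fact
  show "n \<le> y" if "stp P r (hist P r Y y)" for y
    using assms(2) that not_le by blast
qed

lemma tau_stops:
  assumes "stops P r Y"
  shows "stp P r (hist P r Y (tau P r Y))" "\<forall>k<tau P r Y. \<not> stp P r (hist P r Y k)"
proof -
  obtain n where "stp P r (hist P r Y n)" using assms unfolding stops_def by blast
  then show "stp P r (hist P r Y (tau P r Y))" unfolding tau_def by (rule LeastI)
  show "\<forall>k<tau P r Y. \<not> stp P r (hist P r Y k)" unfolding tau_def using not_less_Least by blast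
qed

lemma tau_nostop:
  assumes "\<not> stops P r Y"
  shows "tau P r Y = (THE x::nat. False)"
proof -
  have "\<forall>n. \<not> stp P r (hist P r Y n)" using assms unfolding stops_def by auto
  then show ?thesis unfolding tau_def Least_def by simp
qed

(* The error event written through the policy's rules at the individual times, which exhibits
   it as a countable combination of measurable events. *)
lemma decision_iff:
  "(decision P r Y \<noteq> j) \<longleftrightarrow>
     (\<exists>n. stp P r (hist P r Y n) \<and> (\<forall>k<n. \<not> stp P r (hist P r Y k)) \<and> dec P r (hist P r Y n) \<noteq> j) \<or>
     ((\<forall>n. \<not> stp P r (hist P r Y n)) \<and> dec P r (hist P r Y (THE x::nat. False)) \<noteq> j)"
proof (cases "stops P r Y")
  case True
  then have "\<not> (\<forall>n. \<not> stp P r (hist P r Y n))" unfolding stops_def by auto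
  moreover have "(\<exists>n. stp P r (hist P r Y n) \<and> (\<forall>k<n. \<not> stp P r (hist P r Y k)) \<and> dec P r (hist P r Y n) \<noteq> j)
        \<longleftrightarrow> decision P r Y \<noteq> j"
  proof
    assume "\<exists>n. stp P r (hist P r Y n) \<and> (\<forall>k<n. \<not> stp P r (hist P r Y k)) \<and> dec P r (hist P r Y n) \<noteq> j"
    then obtain n
      where n: "stp P r (hist P r Y n)" "\<forall>k<n. \<not> stp P r (hist P r Y k)" "dec P r (hist P r Y n) \<noteq> j"
      by blast
    then show "decision P r Y \<noteq> j" unfolding decision_def using tau_eqI[OF n(1,2)] by simp
  next
    assume "decision P r Y \<noteq> j"
    then show "\<exists>n. stp P r (hist P r Y n) \<and> (\<forall>k<n. \<not> stp P r (hist P r Y k)) \<and> dec P r (hist P r Y n) \<noteq> j"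
      using tau_stops[OF True] unfolding decision_def by blast
  qed
  ultimately show ?thesis by blast
next
  case False
  then have "\<forall>n. \<not> stp P r (hist P r Y n)" unfolding stops_def by auto
  then show ?thesis unfolding decision_def using tau_nostop[OF False] by auto
qed

definition decides_at :: "('r, 'a) policy \<Rightarrow> nat \<Rightarrow> nat \<Rightarrow> 'r \<times> 'a obs \<Rightarrow> bool" where
  "decides_at P m n \<omega> \<longleftrightarrow>
     stp P (fst \<omega>) (hist P (fst \<omega>) (snd \<omega>) n) \<and>
     (\<forall>k<n. \<not> stp P (fst \<omega>) (hist P (fst \<omega>) (snd \<omega>) k)) \<and>
     dec P (fst \<omega>) (hist P (fst \<omega>) (snd \<omega>) n) = m"

lemma decides_at_unique: "decides_at P m n \<omega> \<Longrightarrow> decides_at P m n' \<omega> \<Longrightarrow> n = n'"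
  unfolding decides_at_def by (metis linorder_neqE_nat)

lemma decides_at_decision: "decides_at P m n \<omega> \<Longrightarrow> decision P (fst \<omega>) (snd \<omega>) = m"
  using tau_eqI[of P "fst \<omega>" "snd \<omega>" n] unfolding decides_at_def decision_def by simp

lemma decides_at_tau:
  "stops P (fst \<omega>) (snd \<omega>) \<Longrightarrow> decision P (fst \<omega>) (snd \<omega>) = m \<Longrightarrow>
     decides_at P m (tau P (fst \<omega>) (snd \<omega>)) \<omega>"
  using tau_stops[of P "fst \<omega>" "snd \<omega>"] unfolding decides_at_def decision_def by simp

lemma hist_determined_decides_at: "hist_determined P n (decides_at P m n)"
  unfolding hist_determined_def
proof (intro allI impI)
  fix r Y Y' assume h: "hist P r Y n = hist P r Y' n"
  have "hist P r Y k = hist P r Y' k" if "k \<le> n" for k by (rule hist_eq_le[OF h that])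
  then show "decides_at P m n (r, Y) = decides_at P m n (r, Y')"
    unfolding decides_at_def by simp
qed

lemma DeltaS_less_witness:
  assumes M: "2 \<le> M" and m: "m \<in> {1..M}" and less: "DeltaS M f g P r Y m n < L"
  shows "\<exists>j\<in>{1..M}-{m}. Ssum f g P r Y m n - Ssum f g P r Y j n < L"
proof -
  have "(if m = 1 then 2 else 1) \<in> {1..M}-{m}" using M m by auto
  then have "{1..M}-{m} \<noteq> {}" by blast
  then show ?thesis using less unfolding DeltaS_def by (simp add: Min_less_iff)
qed

lemma delta_event_cover:
  assumes M: "2 \<le> M" and m: "m \<in> {1..M}"
    and less: "DeltaS M f g P (fst \<omega>) (snd \<omega>) m (tau P (fst \<omega>) (snd \<omega>)) < L"
  shows "\<not> stops P (fst \<omega>) (snd \<omega>) \<or> decision P (fst \<omega>) (snd \<omega>) \<noteq> m \<or>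
    (\<exists>j\<in>{1..M}-{m}. \<exists>n. decides_at P m n \<omega> \<and>
       Ssum f g P (fst \<omega>) (snd \<omega>) m n - Ssum f g P (fst \<omega>) (snd \<omega>) j n < L)"
proof (cases "stops P (fst \<omega>) (snd \<omega>) \<and> decision P (fst \<omega>) (snd \<omega>) = m")
  case True
  let ?\<tau> = "tau P (fst \<omega>) (snd \<omega>)"
  have "decides_at P m ?\<tau> \<omega>" using True by (intro decides_at_tau) auto
  moreover obtain j where "j \<in> {1..M}-{m}"
      "Ssum f g P (fst \<omega>) (snd \<omega>) m ?\<tau> - Ssum f g P (fst \<omega>) (snd \<omega>) j ?\<tau> < L"
    using DeltaS_less_witness[OF M m less] by blast
  ultimately show ?thesis by blast
qed blast

context search_policy
begin

lemma decides_at_measurable[measurable]: "Measurable.pred (obs_space R \<mu> f g \<sigma>) (decides_at P m n)"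
  unfolding decides_at_def by measurable

lemma decision_error_sets[measurable]:
  "{\<omega> \<in> space (obs_space R \<mu> f g \<sigma>). decision P (fst \<omega>) (snd \<omega>) \<noteq> j} \<in> sets (obs_space R \<mu> f g \<sigma>)"
  unfolding decision_iff by measurable

lemma wrong_winner_bound:
  assumes jm: "j \<noteq> m"
  shows "emeasure (hyp_space R \<mu> f g m)
           {\<omega> \<in> space (hyp_space R \<mu> f g m). \<exists>n. decides_at P m n \<omega> \<and>
              Ssum f g P (fst \<omega>) (snd \<omega>) m n - Ssum f g P (fst \<omega>) (snd \<omega>) j n < L}
         \<le> ennreal (exp L) * ennreal (err_prob R \<mu> f g P j)"
proof -
  let ?O = "\<lambda>j. obs_space R \<mu> f g (\<lambda>i. snd i = j)"
  let ?S = "\<lambda>\<omega> c n. Ssum f g P (fst \<omega>) (snd \<omega>) c n"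
  interpret Pj: prob_space "?O j" unfolding obs_space_def by (intro prob_space_pair R_prob PiM_cell_law_prob)
  define A where "A = (\<lambda>n. {\<omega> \<in> space (?O m). decides_at P m n \<omega> \<and> ?S \<omega> m n - ?S \<omega> j n < L})"
  define B where "B = (\<lambda>n. {\<omega> \<in> space (?O j). decides_at P m n \<omega>})"
  have A_sets: "range A \<subseteq> sets (?O m)" and B_sets: "range B \<subseteq> sets (?O j)"
    unfolding A_def B_def by auto
  have "disjoint_family A" "disjoint_family B"
    unfolding disjoint_family_on_def A_def B_def using decides_at_unique by blast+
  note disj = this
  have "emeasure (?O m) {\<omega> \<in> space (?O m). \<exists>n. decides_at P m n \<omega> \<and> ?S \<omega> m n - ?S \<omega> j n < L}
      = emeasure (?O m) (\<Union>n. A n)"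
    by (rule arg_cong[where f="emeasure (?O m)"]) (auto simp: A_def)
  also have "\<dots> = (\<Sum>n. emeasure (?O m) (A n))" by (rule suminf_emeasure[OF A_sets disj(1), symmetric])
  also have "\<dots> \<le> (\<Sum>n. ennreal (exp L) * emeasure (?O j) (B n))"
    unfolding A_def B_def
    by (intro suminf_le change_measure_bound[OF jm decides_at_measurable hist_determined_decides_at]) auto
  also have "\<dots> = ennreal (exp L) * emeasure (?O j) (\<Union>n. B n)"
    by (simp add: suminf_emeasure[OF B_sets disj(2)])
  also have "\<dots> \<le> ennreal (exp L) * emeasure (?O j) {\<omega> \<in> space (?O j). decision P (fst \<omega>) (snd \<omega>) \<noteq> j}"
    using jm by (intro mult_left_mono emeasure_mono) (auto simp: B_def dest!: decides_at_decision)
  finally show ?thesis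
    unfolding err_prob_def hyp_space_eq_obs_space by (simp add: Pj.emeasure_eq_measure)
qed

lemma delta_bound:
  assumes M: "2 \<le> M" and m: "m \<in> {1..M}"
    and stops: "AE \<omega> in hyp_space R \<mu> f g m. stops P (fst \<omega>) (snd \<omega>)"
  shows "measure (hyp_space R \<mu> f g m)
            {\<omega> \<in> space (hyp_space R \<mu> f g m).
               DeltaS M f g P (fst \<omega>) (snd \<omega>) m (tau P (fst \<omega>) (snd \<omega>)) < L}
     \<le> err_prob R \<mu> f g P m + (\<Sum>j\<in>{1..M}-{m}. exp L * err_prob R \<mu> f g P j)"
proof -
  let ?Pm = "hyp_space R \<mu> f g m"
  let ?J = "{1..M}-{m}"
  let ?S = "\<lambda>\<omega> c n. Ssum f g P (fst \<omega>) (snd \<omega>) c n"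
  interpret Pm: prob_space ?Pm
    unfolding hyp_space_eq_obs_space obs_space_def by (intro prob_space_pair R_prob PiM_cell_law_prob)
  define N where "N = {\<omega> \<in> space ?Pm. \<not> stops P (fst \<omega>) (snd \<omega>)}"
  define D where "D = {\<omega> \<in> space ?Pm. decision P (fst \<omega>) (snd \<omega>) \<noteq> m}"
  define U where "U = (\<lambda>j. {\<omega> \<in> space ?Pm. \<exists>n. decides_at P m n \<omega> \<and> ?S \<omega> m n - ?S \<omega> j n < L})"
  have N_sets: "N \<in> sets ?Pm"
    unfolding N_def hyp_space_eq_obs_space stops_def by measurable
  have D_sets: "D \<in> sets ?Pm"
    unfolding D_def hyp_space_eq_obs_space by (rule decision_error_sets)
  have U_sets: "U j \<in> sets ?Pm" for j
    unfolding U_def hyp_space_eq_obs_space by measurable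
  have N0: "emeasure ?Pm N = 0"
  proof -
    have eq: "{\<omega> \<in> space ?Pm. \<not> stops P (fst \<omega>) (snd \<omega>)} = N" by (simp add: N_def)
    show ?thesis using stops unfolding AE_iff_measurable[OF N_sets eq] .
  qed
  have cover: "{\<omega> \<in> space ?Pm. DeltaS M f g P (fst \<omega>) (snd \<omega>) m (tau P (fst \<omega>) (snd \<omega>)) < L}
      \<subseteq> N \<union> D \<union> (\<Union>j\<in>?J. U j)"
  proof
    fix \<omega> assume "\<omega> \<in> {\<omega> \<in> space ?Pm.
        DeltaS M f g P (fst \<omega>) (snd \<omega>) m (tau P (fst \<omega>) (snd \<omega>)) < L}"
    then show "\<omega> \<in> N \<union> D \<union> (\<Union>j\<in>?J. U j)"
      using delta_event_cover[OF M m, of f g P \<omega> L] unfolding N_def D_def U_def by blast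
  qed
  have "emeasure ?Pm {\<omega> \<in> space ?Pm. DeltaS M f g P (fst \<omega>) (snd \<omega>) m (tau P (fst \<omega>) (snd \<omega>)) < L}
      \<le> emeasure ?Pm (N \<union> D \<union> (\<Union>j\<in>?J. U j))"
    by (rule emeasure_mono[OF cover]) (use N_sets D_sets U_sets in auto)
  also have "\<dots> \<le> emeasure ?Pm (N \<union> D) + emeasure ?Pm (\<Union>j\<in>?J. U j)"
    by (rule emeasure_subadditive) (use N_sets D_sets U_sets in auto)
  also have "\<dots> \<le> (emeasure ?Pm N + emeasure ?Pm D) + (\<Sum>j\<in>?J. emeasure ?Pm (U j))"
    by (intro add_mono emeasure_subadditive emeasure_subadditive_finite) (use N_sets D_sets U_sets in auto)
  also have "\<dots> = emeasure ?Pm D + (\<Sum>j\<in>?J. emeasure ?Pm (U j))"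
    by (simp add: N0)
  also have "\<dots> \<le> ennreal (err_prob R \<mu> f g P m) + (\<Sum>j\<in>?J. ennreal (exp L) * ennreal (err_prob R \<mu> f g P j))"
  proof (intro add_mono sum_mono)
    show "emeasure ?Pm D \<le> ennreal (err_prob R \<mu> f g P m)"
      unfolding D_def err_prob_def by (simp add: Pm.emeasure_eq_measure)
    show "emeasure ?Pm (U j) \<le> ennreal (exp L) * ennreal (err_prob R \<mu> f g P j)" if "j \<in> ?J" for j
      unfolding U_def by (rule wrong_winner_bound) (use that in auto)
  qed
  also have "\<dots> = ennreal (err_prob R \<mu> f g P m + (\<Sum>j\<in>?J. exp L * err_prob R \<mu> f g P j))"
    by (simp add: ennreal_mult'[symmetric] err_prob_def sum_nonneg)
  finally have "ennreal (measure ?Pm {\<omega> \<in> space ?Pm.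
        DeltaS M f g P (fst \<omega>) (snd \<omega>) m (tau P (fst \<omega>) (snd \<omega>)) < L})
      \<le> ennreal (err_prob R \<mu> f g P m + (\<Sum>j\<in>?J. exp L * err_prob R \<mu> f g P j))"
    by (simp only: Pm.emeasure_eq_measure)
  moreover have "0 \<le> err_prob R \<mu> f g P m + (\<Sum>j\<in>?J. exp L * err_prob R \<mu> f g P j)"
    by (simp add: err_prob_def sum_nonneg)
  ultimately show ?thesis by (simp only: ennreal_le_iff)
qed

end

lemma (in search_model) admissible_search_policy:
  assumes adm: "admissible M K R \<mu> f g P" and m: "m \<in> {1..M}"
  shows "search_policy \<mu> f g R P"
proof unfold_locales
  have same: "obs_space R \<mu> f g \<sigma> \<rightarrow>\<^sub>M count_space UNIV = hyp_space R \<mu> f g m \<rightarrow>\<^sub>M count_space UNIV" for \<sigma>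
    unfolding hyp_space_eq_obs_space by (rule measurable_cong_sets[OF sets_obs_space refl])
  note rules = adm[unfolded admissible_def] m
  show "(\<lambda>\<omega>. sel P (fst \<omega>) (hist P (fst \<omega>) (snd \<omega>) n)) \<in> obs_space R \<mu> f g \<sigma> \<rightarrow>\<^sub>M count_space UNIV"
    and "(\<lambda>\<omega>. stp P (fst \<omega>) (hist P (fst \<omega>) (snd \<omega>) n)) \<in> obs_space R \<mu> f g \<sigma> \<rightarrow>\<^sub>M count_space UNIV"
    and "(\<lambda>\<omega>. dec P (fst \<omega>) (hist P (fst \<omega>) (snd \<omega>) n)) \<in> obs_space R \<mu> f g \<sigma> \<rightarrow>\<^sub>M count_space UNIV"
    for n \<sigma> unfolding same using rules by blast+
qed

(* Asymptotics: with e^L = c^(eps - 1), both c and c^(eps - 1) c are at most c^eps. *)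
lemma exp_scaled_log:
  fixes c \<epsilon> :: real
  assumes "0 < c"
  shows "exp (- (1 - \<epsilon>) * ln c) * (- c * ln c) = - (c powr \<epsilon>) * ln c"
proof -
  have "exp (- (1 - \<epsilon>) * ln c) = c powr (\<epsilon> - 1)"
    using assms by (simp add: powr_def algebra_simps)
  moreover have "c powr (\<epsilon> - 1) * c = c powr \<epsilon>"
    using assms by (simp add: powr_add[symmetric] powr_diff)
  ultimately show ?thesis by (simp add: algebra_simps)
qed

lemma le_powr_of_le_one:
  fixes c \<epsilon> :: real
  assumes "0 < c" "c < 1" "\<epsilon> \<le> 1"
  shows "c \<le> c powr \<epsilon>"
proof -
  have "c powr 1 \<le> c powr \<epsilon>" using assms by (intro powr_mono') auto
  then show ?thesis using assms by simp
qed

lemma bigo_from_delta_bound: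
  fixes p :: "real \<Rightarrow> real" and \<alpha> :: "nat \<Rightarrow> real \<Rightarrow> real"
  assumes \<epsilon>: "\<epsilon> \<le> 1"
    and bound: "\<forall>\<^sub>F c in at_right 0. 0 \<le> p c \<and> p c \<le> \<alpha> m c + (\<Sum>j\<in>J. exp (- (1 - \<epsilon>) * ln c) * \<alpha> j c)"
    and \<alpha>: "\<And>j. j \<in> insert m J \<Longrightarrow> \<alpha> j \<in> O[at_right 0](\<lambda>c. - c * ln c)"
  shows "p \<in> O[at_right 0](\<lambda>c. - (c powr \<epsilon>) * ln c)"
proof -
  let ?h = "\<lambda>c. \<alpha> m c + (\<Sum>j\<in>J. exp (- (1 - \<epsilon>) * ln c) * \<alpha> j c)"
  have unit: "\<forall>\<^sub>F c in at_right (0::real). c \<in> {0<..<1}"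
    unfolding eventually_at_right_field by (intro exI[of _ 1]) auto
  have p_h: "p \<in> O[at_right 0](?h)"
    by (intro bigoI[where c=1] eventually_mono[OF bound]) auto
  have c_eps: "(\<lambda>c. - c * ln c) \<in> O[at_right 0](\<lambda>c. - (c powr \<epsilon>) * ln c)"
    by (intro bigoI[where c=1] eventually_mono[OF unit])
      (auto simp: abs_mult le_powr_of_le_one \<epsilon> intro!: mult_right_mono)
  have competitors: "(\<lambda>c. exp (- (1 - \<epsilon>) * ln c) * \<alpha> j c) \<in> O[at_right 0](\<lambda>c. - (c powr \<epsilon>) * ln c)"
    if "j \<in> J" for j
  proof -
    have "(\<lambda>c. exp (- (1 - \<epsilon>) * ln c) * \<alpha> j c)
        \<in> O[at_right 0](\<lambda>c. exp (- (1 - \<epsilon>) * ln c) * (- c * ln c))"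
      using \<alpha> that by (intro landau_o.big.mult_left) auto
    also have "(\<lambda>c. exp (- (1 - \<epsilon>) * ln c) * (- c * ln c)) \<in> O[at_right 0](\<lambda>c. - (c powr \<epsilon>) * ln c)"
    proof (intro bigoI[where c=1] eventually_mono[OF unit])
      fix c :: real assume "c \<in> {0<..<1}"
      then show "norm (exp (- (1 - \<epsilon>) * ln c) * (- c * ln c)) \<le> 1 * norm (- (c powr \<epsilon>) * ln c)"
        by (subst exp_scaled_log) auto
    qed
    finally show ?thesis .
  qed
  have "?h \<in> O[at_right 0](\<lambda>c. - (c powr \<epsilon>) * ln c)"
    using landau_o.big_trans[OF \<alpha>[of m] c_eps] big_sum_in_bigo[OF competitors]
    by (intro sum_in_bigo(1)) auto
  then show ?thesis by (rule landau_o.big_trans[OF p_h])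
qed

theorem lemma1:
  fixes M K :: nat and \<mu> :: "'a measure" and f g :: "'a \<Rightarrow> real"
    and R :: "real \<Rightarrow> 'r measure" and \<Gamma> :: "real \<Rightarrow> ('r, 'a) policy"
    and \<epsilon> :: real and m :: nat
  assumes "2 \<le> M" and "1 \<le> K" and "K \<le> M"
    and "f \<in> borel_measurable \<mu>" and "g \<in> borel_measurable \<mu>"
    and "\<forall>x\<in>space \<mu>. 0 \<le> f x" and "\<forall>x\<in>space \<mu>. 0 \<le> g x"
    and "prob_space (density \<mu> (\<lambda>x. ennreal (f x)))"
    and "prob_space (density \<mu> (\<lambda>x. ennreal (g x)))"
    and "AE x in \<mu>. (f x = 0 \<longleftrightarrow> g x = 0)"
    and "integrable \<mu> (\<lambda>x. g x * ln (g x / f x))"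
    and "0 < (\<integral>x. g x * ln (g x / f x) \<partial>\<mu>)"
    and "integrable \<mu> (\<lambda>x. f x * ln (f x / g x))"
    and "0 < (\<integral>x. f x * ln (f x / g x) \<partial>\<mu>)"
    and "\<forall>c\<in>{0<..<1}. prob_space (R c)"
    and "\<forall>c\<in>{0<..<1}. admissible M K (R c) \<mu> f g (\<Gamma> c)"
    and "\<forall>c\<in>{0<..<1}. \<forall>j\<in>{1..M}.
           AE \<omega> in hyp_space (R c) \<mu> f g j. stops (\<Gamma> c) (fst \<omega>) (snd \<omega>)"
    and "\<forall>j\<in>{1..M}. (\<lambda>c. err_prob (R c) \<mu> f g (\<Gamma> c) j) \<in> O[at_right 0](\<lambda>c. - c * ln c)"
    and "0 < \<epsilon>" and "\<epsilon> < 1"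
    and "m \<in> {1..M}"
  shows "(\<lambda>c. measure (hyp_space (R c) \<mu> f g m)
            {\<omega> \<in> space (hyp_space (R c) \<mu> f g m).
               DeltaS M f g (\<Gamma> c) (fst \<omega>) (snd \<omega>) m (tau (\<Gamma> c) (fst \<omega>) (snd \<omega>))
                 < - (1 - \<epsilon>) * ln c})
         \<in> O[at_right 0](\<lambda>c. - (c powr \<epsilon>) * ln c)"
proof -
  have "\<forall>\<^sub>F c in at_right (0::real). c \<in> {0<..<1}"
    unfolding eventually_at_right_field by (intro exI[of _ 1]) auto
  then have bound: "\<forall>\<^sub>F c in at_right 0.
      0 \<le> measure (hyp_space (R c) \<mu> f g m)
            {\<omega> \<in> space (hyp_space (R c) \<mu> f g m).
               DeltaS M f g (\<Gamma> c) (fst \<omega>) (snd \<omega>) m (tau (\<Gamma> c) (fst \<omega>) (snd \<omega>))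
                 < - (1 - \<epsilon>) * ln c} \<and>
      measure (hyp_space (R c) \<mu> f g m)
            {\<omega> \<in> space (hyp_space (R c) \<mu> f g m).
               DeltaS M f g (\<Gamma> c) (fst \<omega>) (snd \<omega>) m (tau (\<Gamma> c) (fst \<omega>) (snd \<omega>))
                 < - (1 - \<epsilon>) * ln c}
        \<le> err_prob (R c) \<mu> f g (\<Gamma> c) m +
           (\<Sum>j\<in>{1..M}-{m}. exp (- (1 - \<epsilon>) * ln c) * err_prob (R c) \<mu> f g (\<Gamma> c) j)"
  proof eventually_elim
    case (elim c)
    interpret search_model \<mu> f g "R c"
      by (rule search_model.intro) (use assms elim in auto)
    interpret search_policy \<mu> f g "R c" "\<Gamma> c"
      by (rule admissible_search_policy[of M K _ m]) (use assms elim in auto)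
    have "AE \<omega> in hyp_space (R c) \<mu> f g m. stops (\<Gamma> c) (fst \<omega>) (snd \<omega>)"
      using assms(17,21) elim by blast
    then show ?case
      using delta_bound[OF assms(1,21)] by (simp add: err_prob_def sum_nonneg)
  qed
  show ?thesis
    by (rule bigo_from_delta_bound[OF _ bound]) (use assms in auto)
qed

end
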